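(* Consider the full GAN dynamics with $N_r=N_g=N$ and all masses $p_i=\tilde p_j=1/N$, with $\lambda>0$ and $\mu=\eta_g/\eta_d>0$ fixed. Suppose the true points $x_1,\dots,x_N$ admit isolated neighborhoods, and that at every true point $x_i$ the kernel satisfies: $\frac{\partial K(x,x_i)}{\partial x}|_{x=x_i}=0$, $-\frac{\partial^2K(x,x_i)}{\partial x^2}|_{x=x_i}\in[k_1,k_2]I$ and $\frac{\partial^2K(x,x')}{\partial x\partial x'}|_{x=x'=x_i}\in[k_3,k_4]I$ for some constants $k_1,\dots,k_4>0$. Consider any equilibrium $(\theta^*,\tilde x_1^*,\dots,\tilde x_N^* )$ of the full dynamics with $\mathrm{supp}(P_g)\subseteq\mathrm{supp}(P_r)$, i.e. each $\tilde x_j^*\in\{x_1,\dots,x_N\}$. Then, for all sufficiently small $\eta_d>0$: if $P_g=P_r$ (each true point carries exactly one generated point) the equilibrium is locally stable, and otherwise it is locally unstable. In particular, $P_g=P_r$ is the only locally stable equilibrium with $\mathrm{supp}(P_g)\subseteq\mathrm{supp}(P_r)$.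
   Context: Full GAN dynamics: $a:\mathbb{R}^d\to\mathbb{R}^p$ is a $C^2$ feature map, $K(x,x')=a(x)^\top a(x')$ (assumed smooth), $f(x,\theta)=a(x)^\top\theta$. True distribution $P_r=\sum_{i=1}^{N_r}p_i\delta_{x_i}$, generated distribution $P_g=\sum_{j=1}^{N_g}\tilde p_j\delta_{\tilde x_j}$ with fixed masses; $\mathrm{supp}$ denotes the set of atoms. The dynamics on $(\theta,\tilde x_1,\dots,\tilde x_{N_g})$ is $\theta^{k+1}=\theta^k+\eta_d\big(\sum_i p_ia(x_i)-\sum_j\tilde p_ja(\tilde x_j^k)-\lambda\theta^k\big)$, $\tilde x_j^{k+1}=\tilde x_j^k+\eta_g\tilde p_j\nabla_xf(\tilde x_j^k,\theta^k)$, with $\lambda>0$, $\eta_d,\eta_g>0$, $\mu=\eta_g/\eta_d$. Isolated neighborhoods: there are open neighborhoods $V_i\ni x_i$ such that $K(x,x')=0$ for all $x\in V_i$, $x'\in V_l$, $i\neq l$. Here $[q_1,q_2]I$ denotes symmetric matrices $Q$ with $q_1I\preceq Q\preceq q_2I$. An equilibrium $z^*$ (fixed point of the update map) is locally stable if for every $\epsilon>0$ there is $\delta>0$ with $\|z^0-z^*\|<\delta\Rightarrow\|z^k-z^*\|<\epsilon$ for all $k$; locally unstable otherwise. *)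

theory Defs
  imports "HOL-Analysis.Analysis"
begin

definition kern :: "('d::euclidean_space \<Rightarrow> 'b::euclidean_space) \<Rightarrow> 'd \<Rightarrow> 'd \<Rightarrow> real" where
  "kern a x x' = a x \<bullet> a x'"

definition C2 :: "('d::euclidean_space \<Rightarrow> 'b::euclidean_space) \<Rightarrow> bool" where
  "C2 f \<longleftrightarrow> (\<exists>f' f''.
      (\<forall>x. (f has_derivative blinfun_apply (f' x)) (at x)) \<and>
      (\<forall>x. (f' has_derivative blinfun_apply (f'' x)) (at x)) \<and>
      continuous_on UNIV f'')"

text \<open>Smoothness (C^infinity) of a real-valued function: derivatives of every order exist.
  D n x [v_1,...,v_n] is the n-th derivative at x applied to v_1,...,v_n.\<close>
definition smooth_fun :: "('x::euclidean_space \<Rightarrow> real) \<Rightarrow> bool" where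
  "smooth_fun f \<longleftrightarrow> (\<exists>D :: nat \<Rightarrow> 'x \<Rightarrow> 'x list \<Rightarrow> real.
      (\<forall>x. D 0 x [] = f x) \<and>
      (\<forall>n vs x. length vs = n \<longrightarrow>
          ((\<lambda>y. D n y vs) has_derivative (\<lambda>h. D (Suc n) x (h # vs))) (at x)))"

definition grad :: "('d::real_inner \<Rightarrow> real) \<Rightarrow> 'd \<Rightarrow> 'd" where
  "grad f x = (THE D. GDERIV f x :> D)"

definition op_in_interval :: "real \<Rightarrow> real \<Rightarrow> ('d::real_inner \<Rightarrow> 'd) \<Rightarrow> bool" where
  "op_in_interval q1 q2 Q \<longleftrightarrow>
     (\<forall>u v. u \<bullet> Q v = Q u \<bullet> v) \<and>
     (\<forall>v. q1 * (v \<bullet> v) \<le> v \<bullet> Q v \<and> v \<bullet> Q v \<le> q2 * (v \<bullet> v))"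

definition neg_hessian_in :: "('d::euclidean_space \<Rightarrow> 'd \<Rightarrow> real) \<Rightarrow> 'd \<Rightarrow> real \<Rightarrow> real \<Rightarrow> bool" where
  "neg_hessian_in K x0 k1 k2 \<longleftrightarrow> (\<exists>G H.
      (\<forall>x. GDERIV (\<lambda>y. K y x0) x :> G x) \<and> (G has_derivative H) (at x0) \<and>
      op_in_interval k1 k2 (\<lambda>v. - H v))"

definition mixed_hessian_in :: "('d::euclidean_space \<Rightarrow> 'd \<Rightarrow> real) \<Rightarrow> 'd \<Rightarrow> real \<Rightarrow> real \<Rightarrow> bool" where
  "mixed_hessian_in K x0 k3 k4 \<longleftrightarrow> (\<exists>G M.
      (\<forall>x. GDERIV (\<lambda>y. K x y) x0 :> G x) \<and> (G has_derivative M) (at x0) \<and>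
      op_in_interval k3 k4 M)"

definition isolated_nbhds :: "('d::topological_space \<Rightarrow> 'd \<Rightarrow> real) \<Rightarrow> ('n \<Rightarrow> 'd) \<Rightarrow> bool" where
  "isolated_nbhds K xr \<longleftrightarrow> (\<exists>V :: 'n \<Rightarrow> 'd set.
      (\<forall>i. open (V i) \<and> xr i \<in> V i) \<and>
      (\<forall>i l. i \<noteq> l \<longrightarrow> (\<forall>x\<in>V i. \<forall>x'\<in>V l. K x x' = 0)))"

definition gan_step :: "('d::euclidean_space \<Rightarrow> 'b::euclidean_space) \<Rightarrow> ('n::finite \<Rightarrow> 'd) \<Rightarrow>
     real \<Rightarrow> real \<Rightarrow> real \<Rightarrow> 'b \<times> ('d, 'n) vec \<Rightarrow> 'b \<times> ('d, 'n) vec" where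
  "gan_step a xr lam eta_d eta_g = (\<lambda>(\<theta>, xg).
     (\<theta> + eta_d *\<^sub>R ((\<Sum>i\<in>UNIV. (1 / real CARD('n)) *\<^sub>R a (xr i))
                       - (\<Sum>j\<in>UNIV. (1 / real CARD('n)) *\<^sub>R a (xg $ j))
                       - lam *\<^sub>R \<theta>),
      \<chi> j. xg $ j + (eta_g * (1 / real CARD('n))) *\<^sub>R grad (\<lambda>x. a x \<bullet> \<theta>) (xg $ j)))"

definition locally_stable :: "('s::metric_space \<Rightarrow> 's) \<Rightarrow> 's \<Rightarrow> bool" where
  "locally_stable F z \<longleftrightarrow>
     (\<forall>\<epsilon>>0. \<exists>\<delta>>0. \<forall>z0. dist z0 z < \<delta> \<longrightarrow> (\<forall>k. dist ((F ^^ k) z0) z < \<epsilon>))"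

text \<open>P_g = P_r for equal masses 1/N: every point carries the same number of
  generated atoms as true atoms.\<close>
definition same_distr :: "('n::finite \<Rightarrow> 'd) \<Rightarrow> ('d, 'n) vec \<Rightarrow> bool" where
  "same_distr xr xg \<longleftrightarrow> (\<forall>y. card {j. xg $ j = y} = card {i. xr i = y})"

end

theory Submission
  imports Defs
begin

text \<open>
  At an equilibrium the discriminator is \<open>\<theta>s = (mean of a over P_r - mean of a over P_g) / \<lambda>\<close>,
  and isolation makes the kernel block diagonal near the true points.

  If two generated points sit on the same true point \<open>p\<close>, the curvature bound \<open>k1\<close> makes
  \<open>x \<mapsto> a x \<bullet> \<theta>\<close> uniformly convex near \<open>p\<close> for all \<open>\<theta>\<close> near \<open>\<theta>s\<close>. The generator takes gradient
  ascent steps on this function, so the distance between the two points grows geometrically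
  while the orbit stays near the equilibrium; hence no perturbation separating them stays
  small. This works for every step size.

  If \<open>P_g = P_r\<close>, then \<open>\<theta>s = 0\<close> and the dynamics is differentiable at the equilibrium with
  derivative \<open>(u, w) \<mapsto> (u - \<eta> (\<lambda> u + J w), w + \<mu> \<eta> J\<^sup>* u)\<close>, where \<open>J\<close> is the derivative of
  the generated mean feature; by the mixed Hessian bound and block orthogonality \<open>J\<close> is
  coercive. A quadratic form with a small cross term \<open>u \<bullet> J w\<close> decreases by a multiple of
  \<open>\<eta> |v|\<^sup>2\<close> under this linear map when \<open>\<eta>\<close> is small, which yields local stability.
\<close>

lemma adjoint_blinfun_inner:
  fixes A :: "'a::euclidean_space \<Rightarrow>\<^sub>L 'c::euclidean_space"
  shows "x \<bullet> adjoint (blinfun_apply A) y = blinfun_apply A x \<bullet> y"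
  by (rule adjoint_works[OF bounded_linear.linear[OF blinfun.bounded_linear_right]])

lemma gderiv_unique:
  assumes "GDERIV f x :> D" "GDERIV f x :> D'"
  shows "D = D'"
proof -
  have "(\<lambda>h. h \<bullet> D) = (\<lambda>h. h \<bullet> D')"
    using assms unfolding gderiv_def by (meson has_derivative_unique)
  then have "(D - D') \<bullet> D = (D - D') \<bullet> D'" by metis
  then have "(D - D') \<bullet> (D - D') = 0" by (simp add: inner_diff_right)
  then show ?thesis by simp
qed

lemma gderiv_inner_eq_adjoint:
  fixes a :: "'d::euclidean_space \<Rightarrow> 'b::euclidean_space"
  assumes "(a has_derivative blinfun_apply A) (at x)"
  shows "GDERIV (\<lambda>x. a x \<bullet> \<theta>) x :> adjoint (blinfun_apply A) \<theta>"
proof -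
  have "((\<lambda>x. a x \<bullet> \<theta>) has_derivative (\<lambda>h. blinfun_apply A h \<bullet> \<theta>)) (at x)"
    by (rule has_derivative_inner_left[OF assms])
  then show ?thesis
    unfolding gderiv_def by (simp add: adjoint_blinfun_inner)
qed

lemma grad_inner_eq_adjoint:
  fixes a :: "'d::euclidean_space \<Rightarrow> 'b::euclidean_space"
  assumes "(a has_derivative blinfun_apply A) (at x)"
  shows "grad (\<lambda>x. a x \<bullet> \<theta>) x = adjoint (blinfun_apply A) \<theta>"
  unfolding grad_def using gderiv_inner_eq_adjoint[OF assms] gderiv_unique by blast

lemma has_derivative_eq_0_if_vanishing_on_open:
  assumes "open V" "p \<in> V" "\<forall>x\<in>V. g x = 0" "(g has_derivative D) (at p)"
  shows "D h = 0"
proof -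
  have "(g has_derivative (\<lambda>_. 0)) (at p)"
    by (rule has_derivative_transform_within_open[where f="\<lambda>_. 0"]) (use assms in auto)
  then show ?thesis using assms(4) has_derivative_unique by metis
qed

lemma has_derivative_blinfun_apply_inner:
  assumes "(F has_derivative blinfun_apply D) (at p)"
  shows "((\<lambda>x. blinfun_apply (F x) e \<bullet> q) has_derivative
           (\<lambda>h. blinfun_apply (blinfun_apply D h) e \<bullet> q)) (at p)"
  by (rule has_derivative_inner_left
      [OF bounded_linear.has_derivative[OF blinfun.bounded_linear_left assms]])

lemma norm_adjoint_diff_le:
  fixes A B :: "'a::euclidean_space \<Rightarrow>\<^sub>L 'c::euclidean_space"
  shows "norm (adjoint (blinfun_apply A) u - adjoint (blinfun_apply B) u) \<le> norm (A - B) * norm u"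
proof -
  define d where "d = adjoint (blinfun_apply A) u - adjoint (blinfun_apply B) u"
  have "norm d * norm d = blinfun_apply (A - B) d \<bullet> u"
    by (simp add: d_def inner_diff_right adjoint_blinfun_inner blinfun.diff_left
        inner_diff_left flip: dot_square_norm power2_eq_square)
  also have "\<dots> \<le> norm (blinfun_apply (A - B) d) * norm u" by (rule norm_cauchy_schwarz)
  also have "\<dots> \<le> norm (A - B) * norm d * norm u" by (intro mult_right_mono norm_blinfun) auto
  finally have "norm d * norm d \<le> (norm (A - B) * norm u) * norm d" by (simp add: mult_ac)
  then show ?thesis
    by (cases "norm d = 0") (auto simp: d_def mult_le_cancel_right)
qed

definition blinfun_diag :: "('d::real_normed_vector \<Rightarrow>\<^sub>L 'd \<Rightarrow>\<^sub>L 'b::real_normed_vector) \<Rightarrow> 'd \<Rightarrow> 'b"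
  where "blinfun_diag A e = blinfun_apply (blinfun_apply A e) e"

lemma blinfun_diag_diff: "blinfun_diag (A - B) e = blinfun_diag A e - blinfun_diag B e"
  unfolding blinfun_diag_def by (simp add: blinfun.diff_left)

lemma abs_blinfun_diag_inner_le:
  fixes A :: "'d::real_inner \<Rightarrow>\<^sub>L 'd \<Rightarrow>\<^sub>L 'b::real_inner"
  shows "\<bar>blinfun_diag A e \<bullet> q\<bar> \<le> norm A * norm q * (e \<bullet> e)"
proof -
  have "norm (blinfun_diag A e) \<le> norm (blinfun_apply A e) * norm e"
    unfolding blinfun_diag_def by (rule norm_blinfun)
  also have "\<dots> \<le> norm A * norm e * norm e" by (intro mult_right_mono norm_blinfun) auto
  finally have "norm (blinfun_diag A e) * norm q \<le> norm A * norm e * norm e * norm q"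
    by (intro mult_right_mono) auto
  then show ?thesis
    using Cauchy_Schwarz_ineq2[of "blinfun_diag A e" q]
    by (simp add: dot_square_norm power2_eq_square mult_ac)
qed

lemma neg_hessian_in_imp_diag_le:
  fixes a :: "'d::euclidean_space \<Rightarrow> 'b::euclidean_space"
  assumes da: "\<And>x. (a has_derivative blinfun_apply (f' x)) (at x)"
    and df: "(f' has_derivative blinfun_apply (f'' p)) (at p)"
    and hess: "neg_hessian_in (kern a) p k1 k2"
  shows "blinfun_diag (f'' p) e \<bullet> a p \<le> - k1 * (e \<bullet> e)"
proof -
  obtain G H where G: "\<forall>x. GDERIV (\<lambda>y. kern a y p) x :> G x" and H: "(G has_derivative H) (at p)"
    and I: "op_in_interval k1 k2 (\<lambda>v. - H v)"
    using hess unfolding neg_hessian_in_def by blast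
  have "G x = adjoint (blinfun_apply (f' x)) (a p)" for x
    using G gderiv_inner_eq_adjoint[OF da] gderiv_unique unfolding kern_def by blast
  then have eq: "G x \<bullet> e = blinfun_apply (f' x) e \<bullet> a p" for x
    by (simp add: inner_commute adjoint_blinfun_inner)
  have "((\<lambda>x. G x \<bullet> e) has_derivative (\<lambda>h. blinfun_apply (blinfun_apply (f'' p) h) e \<bullet> a p)) (at p)"
    unfolding eq by (rule has_derivative_blinfun_apply_inner[OF df])
  then have "(\<lambda>h. H h \<bullet> e) = (\<lambda>h. blinfun_apply (blinfun_apply (f'' p) h) e \<bullet> a p)"
    using has_derivative_unique[OF has_derivative_inner_left[OF H]] by blast
  then have "H e \<bullet> e = blinfun_diag (f'' p) e \<bullet> a p"
    unfolding blinfun_diag_def by metis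
  moreover have "k1 * (e \<bullet> e) \<le> e \<bullet> (- H e)"
    using I unfolding op_in_interval_def by blast
  ultimately show ?thesis by (simp add: inner_commute)
qed

lemma mixed_hessian_in_imp_coercive:
  fixes a :: "'d::euclidean_space \<Rightarrow> 'b::euclidean_space"
  assumes da: "\<And>x. (a has_derivative blinfun_apply (f' x)) (at x)"
    and mixed: "mixed_hessian_in (kern a) p k3 k4"
  shows "k3 * (v \<bullet> v) \<le> blinfun_apply (f' p) v \<bullet> blinfun_apply (f' p) v"
proof -
  obtain G M where G: "\<forall>x. GDERIV (\<lambda>y. kern a x y) p :> G x" and M: "(G has_derivative M) (at p)"
    and I: "op_in_interval k3 k4 M"
    using mixed unfolding mixed_hessian_in_def by blast
  have "G x = adjoint (blinfun_apply (f' p)) (a x)" for x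
  proof -
    have "GDERIV (\<lambda>y. a y \<bullet> a x) p :> G x"
      using G unfolding kern_def by (subst inner_commute) simp
    then show ?thesis using gderiv_inner_eq_adjoint[OF da] gderiv_unique by blast
  qed
  then have eq: "G x \<bullet> v = a x \<bullet> blinfun_apply (f' p) v" for x
    by (simp add: inner_commute adjoint_blinfun_inner)
  have "((\<lambda>x. G x \<bullet> v) has_derivative (\<lambda>h. blinfun_apply (f' p) h \<bullet> blinfun_apply (f' p) v)) (at p)"
    unfolding eq by (rule has_derivative_inner_left[OF da])
  then have "(\<lambda>h. M h \<bullet> v) = (\<lambda>h. blinfun_apply (f' p) h \<bullet> blinfun_apply (f' p) v)"
    using has_derivative_unique[OF has_derivative_inner_left[OF M]] by blast
  then have "M v \<bullet> v = blinfun_apply (f' p) v \<bullet> blinfun_apply (f' p) v" by metis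
  moreover have "k3 * (v \<bullet> v) \<le> v \<bullet> M v"
    using I unfolding op_in_interval_def by blast
  ultimately show ?thesis by (simp add: inner_commute)
qed

lemma second_deriv_inner_eq_0_if_orthogonal_near:
  fixes a :: "'d::euclidean_space \<Rightarrow> 'b::euclidean_space"
  assumes da: "\<And>x. (a has_derivative blinfun_apply (f' x)) (at x)"
    and df: "(f' has_derivative blinfun_apply (f'' p)) (at p)"
    and V: "open V" "p \<in> V" and orth: "\<forall>x\<in>V. a x \<bullet> q = 0"
  shows "blinfun_apply (blinfun_apply (f'' p) h) e \<bullet> q = 0"
proof -
  have "\<forall>x\<in>V. blinfun_apply (f' x) e \<bullet> q = 0"
    using has_derivative_eq_0_if_vanishing_on_open[OF V(1) _ orth has_derivative_inner_left[OF da]]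
    by blast
  then show ?thesis
    by (rule has_derivative_eq_0_if_vanishing_on_open[OF V _ has_derivative_blinfun_apply_inner[OF df]])
qed

lemma first_derivs_orthogonal_if_orthogonal_near:
  fixes a :: "'d::euclidean_space \<Rightarrow> 'b::euclidean_space"
  assumes da: "\<And>x. (a has_derivative blinfun_apply (f' x)) (at x)"
    and V: "open V" "p \<in> V" and W: "open W" "q \<in> W"
    and orth: "\<forall>x\<in>V. \<forall>y\<in>W. a x \<bullet> a y = 0"
  shows "blinfun_apply (f' p) v \<bullet> blinfun_apply (f' q) w = 0"
proof -
  have "\<forall>y\<in>W. blinfun_apply (f' p) v \<bullet> a y = 0"
    using orth has_derivative_eq_0_if_vanishing_on_open[OF V _ has_derivative_inner_left[OF da]]
    by blast
  then have "\<forall>y\<in>W. a y \<bullet> blinfun_apply (f' p) v = 0" by (simp add: inner_commute)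
  from has_derivative_eq_0_if_vanishing_on_open[OF W this has_derivative_inner_left[OF da]]
  show ?thesis by (simp add: inner_commute)
qed

lemma blinfun_diag_inner_ge_near:
  fixes f'' :: "'d::euclidean_space \<Rightarrow> 'd \<Rightarrow>\<^sub>L 'd \<Rightarrow>\<^sub>L 'b::euclidean_space"
  assumes cf: "continuous_on UNIV f''" and al: "\<alpha> > 0"
    and base: "\<And>e. blinfun_diag (f'' p) e \<bullet> \<theta>s \<ge> 2 * \<alpha> * (e \<bullet> e)"
  shows "\<exists>\<rho>>0. \<forall>\<theta> x e. dist \<theta> \<theta>s < \<rho> \<and> dist x p < \<rho> \<longrightarrow>
           blinfun_diag (f'' x) e \<bullet> \<theta> \<ge> \<alpha> * (e \<bullet> e)"
proof -
  define \<epsilon> where "\<epsilon> = \<alpha> / (2 * (norm \<theta>s + 1))"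
  have nt: "norm \<theta>s + 1 > 0" by (smt (verit) norm_ge_zero)
  have e: "\<epsilon> > 0" unfolding \<epsilon>_def using al nt by simp
  obtain d where d: "d > 0" and dd: "\<And>x. dist x p < d \<Longrightarrow> dist (f'' x) (f'' p) < \<epsilon>"
    using cf e unfolding continuous_on_iff by blast
  define M where "M = norm (f'' p) + \<epsilon>"
  have M: "M > 0" using e by (simp add: M_def add_nonneg_pos)
  define \<rho> where "\<rho> = min d (\<alpha> / (2 * M))"
  have "\<rho> > 0" using d al M by (simp add: \<rho>_def)
  moreover have "blinfun_diag (f'' x) e \<bullet> \<theta> \<ge> \<alpha> * (e \<bullet> e)"
    if th: "dist \<theta> \<theta>s < \<rho>" and x: "dist x p < \<rho>" for \<theta> x e
  proof -
    have nx: "norm (f'' x - f'' p) < \<epsilon>" using dd[of x] x by (simp add: \<rho>_def dist_norm)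
    have nM: "norm (f'' x) \<le> M"
      using norm_triangle_ineq[of "f'' x - f'' p" "f'' p"] nx by (simp add: M_def)
    have ee: "e \<bullet> e \<ge> 0" by simp
    have "\<bar>blinfun_diag (f'' x) e \<bullet> (\<theta> - \<theta>s)\<bar> \<le> norm (f'' x) * norm (\<theta> - \<theta>s) * (e \<bullet> e)"
      by (rule abs_blinfun_diag_inner_le)
    also have "\<dots> \<le> M * (\<alpha> / (2 * M)) * (e \<bullet> e)"
      using th nM ee M by (intro mult_right_mono mult_mono) (auto simp: \<rho>_def dist_norm)
    finally have 1: "\<bar>blinfun_diag (f'' x) e \<bullet> (\<theta> - \<theta>s)\<bar> \<le> \<alpha> / 2 * (e \<bullet> e)"
      using M by simp
    have "\<bar>blinfun_diag (f'' x - f'' p) e \<bullet> \<theta>s\<bar> \<le> norm (f'' x - f'' p) * norm \<theta>s * (e \<bullet> e)"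
      by (rule abs_blinfun_diag_inner_le)
    also have "\<dots> \<le> \<epsilon> * (norm \<theta>s + 1) * (e \<bullet> e)"
      using nx ee e by (intro mult_right_mono mult_mono) auto
    also have "\<dots> = \<alpha> / 2 * (e \<bullet> e)" using nt by (simp add: \<epsilon>_def field_simps)
    finally have 2: "\<bar>blinfun_diag (f'' x - f'' p) e \<bullet> \<theta>s\<bar> \<le> \<alpha> / 2 * (e \<bullet> e)" .
    have "blinfun_diag (f'' x) e \<bullet> \<theta> = blinfun_diag (f'' p) e \<bullet> \<theta>s
        + blinfun_diag (f'' x) e \<bullet> (\<theta> - \<theta>s) + blinfun_diag (f'' x - f'' p) e \<bullet> \<theta>s"
      by (simp add: blinfun_diag_diff inner_diff_left inner_diff_right)
    then show ?thesis using base[of e] 1 2 by linarith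
  qed
  ultimately show ?thesis by blast
qed

text \<open>Strong convexity of \<open>x \<mapsto> a x \<bullet> \<theta>\<close> near \<open>p\<close>, uniformly for \<open>\<theta>\<close> near \<open>\<theta>s\<close>, stated as
  strong monotonicity of its gradient \<open>adjoint (f' x) \<theta>\<close>.\<close>

lemma deriv_inner_strongly_monotone_near:
  fixes f' :: "'d::euclidean_space \<Rightarrow> 'd \<Rightarrow>\<^sub>L 'b::euclidean_space"
  assumes df: "\<And>x. (f' has_derivative blinfun_apply (f'' x)) (at x)"
    and cf: "continuous_on UNIV f''" and al: "\<alpha> > 0"
    and base: "\<And>e. blinfun_diag (f'' p) e \<bullet> \<theta>s \<ge> 2 * \<alpha> * (e \<bullet> e)"
  shows "\<exists>\<rho>>0. \<forall>\<theta> x1 x2. dist \<theta> \<theta>s < \<rho> \<and> dist x1 p < \<rho> \<and> dist x2 p < \<rho> \<longrightarrow>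
     blinfun_apply (f' x1) (x1 - x2) \<bullet> \<theta> - blinfun_apply (f' x2) (x1 - x2) \<bullet> \<theta>
       \<ge> \<alpha> * ((x1 - x2) \<bullet> (x1 - x2))"
proof -
  obtain \<rho> where rho: "\<rho> > 0" and pt: "\<And>\<theta> x e. dist \<theta> \<theta>s < \<rho> \<Longrightarrow> dist x p < \<rho> \<Longrightarrow>
      blinfun_diag (f'' x) e \<bullet> \<theta> \<ge> \<alpha> * (e \<bullet> e)"
    using blinfun_diag_inner_ge_near[OF cf al base] by blast
  have "blinfun_apply (f' x1) (x1 - x2) \<bullet> \<theta> - blinfun_apply (f' x2) (x1 - x2) \<bullet> \<theta>
       \<ge> \<alpha> * ((x1 - x2) \<bullet> (x1 - x2))"
    if H: "dist \<theta> \<theta>s < \<rho>" "dist x1 p < \<rho>" "dist x2 p < \<rho>" for \<theta> x1 x2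
  proof -
    define e where "e = x1 - x2"
    define \<phi> where "\<phi> t = blinfun_apply (f' (x2 + t *\<^sub>R e)) e \<bullet> \<theta>" for t :: real
    have "(\<phi> has_derivative (\<lambda>s. s * (blinfun_diag (f'' (x2 + t *\<^sub>R e)) e \<bullet> \<theta>))) (at t within {0..1})"
      for t
    proof -
      have "((\<lambda>t. x2 + t *\<^sub>R e) has_derivative (\<lambda>s. s *\<^sub>R e)) (at t)"
        by (auto intro!: derivative_eq_intros)
      from has_derivative_compose[OF this has_derivative_blinfun_apply_inner[OF df], of e \<theta>]
      show ?thesis
        by (simp add: \<phi>_def[abs_def] o_def blinfun_diag_def blinfun.scaleR_right blinfun.scaleR_left
            has_derivative_at_withinI)
    qed
    from mvt_simple[of 0 1 \<phi>, OF _ this] obtain t where t: "t \<in> {0<..<1}"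
      and mv: "\<phi> 1 - \<phi> 0 = blinfun_diag (f'' (x2 + t *\<^sub>R e)) e \<bullet> \<theta>"
      by auto
    have "x2 + t *\<^sub>R e - p = (1 - t) *\<^sub>R (x2 - p) + t *\<^sub>R (x1 - p)"
      by (simp add: e_def algebra_simps)
    then have "dist (x2 + t *\<^sub>R e) p \<le> (1 - t) * dist x2 p + t * dist x1 p"
      using t norm_triangle_ineq[of "(1 - t) *\<^sub>R (x2 - p)" "t *\<^sub>R (x1 - p)"]
      by (simp add: dist_norm)
    also have "\<dots> < (1 - t) * \<rho> + t * \<rho>"
      using t H by (intro add_less_le_mono mult_strict_left_mono mult_left_mono) auto
    finally have "dist (x2 + t *\<^sub>R e) p < \<rho>" by (simp add: algebra_simps)
    then show ?thesis using pt[OF H(1)] mv by (simp add: \<phi>_def e_def)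
  qed
  with rho show ?thesis by blast
qed

lemma locally_stable_if_lyapunov_nonincreasing:
  fixes F :: "'e::real_normed_vector \<Rightarrow> 'e" and W :: "'e \<Rightarrow> real"
  assumes m1: "m1 > 0" and m2: "m2 > 0"
    and W_ge: "\<And>v. m1 * (norm v)\<^sup>2 \<le> W v" and W_le: "\<And>v. W v \<le> m2 * (norm v)\<^sup>2"
    and rho: "\<rho> > 0" and W_F: "\<And>z. norm (z - zs) < \<rho> \<Longrightarrow> W (F z - zs) \<le> W (z - zs)"
  shows "locally_stable F zs"
  unfolding locally_stable_def
proof (intro allI impI)
  fix \<epsilon> :: real assume e: "\<epsilon> > 0"
  define r where "r = min \<epsilon> \<rho>"
  have r: "r > 0" using e rho by (simp add: r_def)
  define q where "q = min 1 (m1 / m2)"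
  have q: "q > 0" "q \<le> 1" "q \<le> m1 / m2" using m1 m2 by (auto simp: q_def)
  define \<delta> where "\<delta> = r * q"
  have dl: "\<delta> > 0" "\<delta> \<le> r" using r q by (simp_all add: \<delta>_def mult_left_le)
  have "\<forall>k. dist ((F ^^ k) z0) zs < \<epsilon>" if z0: "dist z0 zs < \<delta>" for z0
  proof -
    have n0: "norm (z0 - zs) < \<delta>" using z0 by (simp add: dist_norm)
    have "W (z0 - zs) \<le> m2 * (norm (z0 - zs))\<^sup>2" by (rule W_le)
    also have "\<dots> < m2 * \<delta>\<^sup>2" using n0 m2 by (intro mult_strict_left_mono power_strict_mono) auto
    also have "\<dots> = m2 * (r\<^sup>2 * q * q)" by (simp add: \<delta>_def power2_eq_square)
    also have "\<dots> \<le> m2 * (r\<^sup>2 * (m1 / m2) * 1)"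
      using q m2 m1 by (intro mult_left_mono mult_mono) auto
    finally have W0: "W (z0 - zs) < m1 * r\<^sup>2" using m2 by (simp add: mult.commute)
    have "W ((F ^^ k) z0 - zs) \<le> W (z0 - zs) \<and> norm ((F ^^ k) z0 - zs) < r" for k
    proof (induction k)
      case 0
      then show ?case using n0 dl by simp
    next
      case (Suc k)
      then have W1: "W ((F ^^ Suc k) z0 - zs) \<le> W (z0 - zs)"
        using W_F[of "(F ^^ k) z0"] by (simp add: r_def)
      then have "m1 * (norm ((F ^^ Suc k) z0 - zs))\<^sup>2 < m1 * r\<^sup>2"
        using W_ge[of "(F ^^ Suc k) z0 - zs"] W0 by simp
      then have "norm ((F ^^ Suc k) z0 - zs) < r"
        using m1 r by (simp add: power_less_imp_less_base)
      then show ?case using W1 by simp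
    qed
    then show ?thesis by (simp add: dist_norm r_def)
  qed
  then show "\<exists>\<delta>>0. \<forall>z0. dist z0 zs < \<delta> \<longrightarrow> (\<forall>k. dist ((F ^^ k) z0) zs < \<epsilon>)"
    using dl by blast
qed

text \<open>The quadratic error of the linearization is absorbed into the strict decrease of \<open>W\<close> along
  \<open>L\<close>, using the quadratic growth bound on increments of \<open>W\<close>.\<close>

lemma locally_stable_if_lyapunov:
  fixes F L :: "'e::real_normed_vector \<Rightarrow> 'e" and W :: "'e \<Rightarrow> real"
  assumes m1: "m1 > 0" and m2: "m2 > 0"
    and W_ge: "\<And>v. m1 * (norm v)\<^sup>2 \<le> W v" and W_le: "\<And>v. W v \<le> m2 * (norm v)\<^sup>2"
    and s: "s > 0" and W_L: "\<And>v. W (L v) \<le> W v - s * (norm v)\<^sup>2"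
    and C: "C > 0" and W_incr: "\<And>x y. W (x + y) - W x \<le> C * (norm x * norm y + (norm y)\<^sup>2)"
    and CL: "CL \<ge> 0" and L_le: "\<And>v. norm (L v) \<le> CL * norm v"
    and linearization: "\<And>\<epsilon>. \<epsilon> > 0 \<Longrightarrow>
      eventually (\<lambda>z. norm (F z - zs - L (z - zs)) \<le> \<epsilon> * norm (z - zs)) (nhds zs)"
  shows "locally_stable F zs"
proof -
  define \<epsilon> where "\<epsilon> = min 1 (s / (C * (CL + 1)))"
  have e: "\<epsilon> > 0" "\<epsilon> \<le> 1" using s C CL by (simp_all add: \<epsilon>_def)
  have "\<epsilon> \<le> s / (C * (CL + 1))" by (simp add: \<epsilon>_def)
  then have e2: "C * (CL + 1) * \<epsilon> \<le> s" using C CL by (simp add: pos_le_divide_eq mult.commute)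
  obtain \<rho> where rho: "\<rho> > 0"
    and R: "\<And>z. norm (z - zs) < \<rho> \<Longrightarrow> norm (F z - zs - L (z - zs)) \<le> \<epsilon> * norm (z - zs)"
    using linearization[OF e(1)] unfolding eventually_nhds_metric dist_norm by blast
  have "W (F z - zs) \<le> W (z - zs)" if z: "norm (z - zs) < \<rho>" for z
  proof -
    define v where "v = z - zs"
    define r where "r = F z - zs - L v"
    have nr: "norm r \<le> \<epsilon> * norm v" using R[OF z] by (simp add: r_def v_def)
    have "W (F z - zs) \<le> W (L v) + C * (norm (L v) * norm r + (norm r)\<^sup>2)"
      using W_incr[of "L v" r] by (simp add: r_def)
    also have "C * (norm (L v) * norm r + (norm r)\<^sup>2) \<le> C * ((CL * norm v) * (\<epsilon> * norm v) + (\<epsilon> * norm v)\<^sup>2)"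
      using C L_le[of v] nr e CL
      by (intro mult_left_mono add_mono mult_mono power_mono) auto
    also have "\<dots> = C * (CL + \<epsilon>) * \<epsilon> * (norm v)\<^sup>2" by (simp add: power2_eq_square algebra_simps)
    also have "\<dots> \<le> C * (CL + 1) * \<epsilon> * (norm v)\<^sup>2"
      using C e CL by (intro mult_right_mono mult_left_mono) auto
    also have "\<dots> \<le> s * (norm v)\<^sup>2" using e2 by (intro mult_right_mono) auto
    finally show ?thesis using W_L[of v] by (simp add: v_def)
  qed
  with locally_stable_if_lyapunov_nonincreasing[OF m1 m2 W_ge W_le rho] show ?thesis by blast
qed

lemma not_locally_stable_if_expanding:
  fixes F :: "'s::metric_space \<Rightarrow> 's" and g :: "'s \<Rightarrow> 'e::real_normed_vector"
  assumes c: "c > 1" and rho: "\<rho> > 0"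
    and expand: "\<And>z. dist z zs < \<rho> \<Longrightarrow> norm (g (F z)) \<ge> c * norm (g z)"
    and bounded: "\<And>z. dist z zs < \<rho> \<Longrightarrow> norm (g z) \<le> B"
    and perturb: "\<And>\<delta>. \<delta> > 0 \<Longrightarrow> \<exists>z. dist z zs < \<delta> \<and> g z \<noteq> 0"
  shows "\<not> locally_stable F zs"
proof
  assume "locally_stable F zs"
  then obtain \<delta> where "\<delta> > 0" and stay: "\<And>z k. dist z zs < \<delta> \<Longrightarrow> dist ((F ^^ k) z) zs < \<rho>"
    using rho unfolding locally_stable_def by blast
  then obtain z where z: "dist z zs < \<delta>" "g z \<noteq> 0" using perturb by blast
  have grow: "c ^ k * norm (g z) \<le> norm (g ((F ^^ k) z))" for k
  proof (induction k)
    case (Suc k)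
    have "c ^ Suc k * norm (g z) \<le> c * norm (g ((F ^^ k) z))"
      using Suc c by simp
    also have "\<dots> \<le> norm (g ((F ^^ Suc k) z))"
      using expand[OF stay[OF z(1)]] by simp
    finally show ?case .
  qed simp
  obtain k where "B / norm (g z) < c ^ k"
    using real_arch_pow[OF c] by blast
  then have "B < c ^ k * norm (g z)" using z(2) by (simp add: field_simps)
  then show False using grow[of k] bounded[OF stay[OF z(1)], of k] by simp
qed

locale gan_dynamics =
  fixes a :: "'d::euclidean_space \<Rightarrow> 'b::euclidean_space"
    and xr :: "'n::finite \<Rightarrow> 'd"
    and f' :: "'d \<Rightarrow> 'd \<Rightarrow>\<^sub>L 'b" and f'' :: "'d \<Rightarrow> 'd \<Rightarrow>\<^sub>L 'd \<Rightarrow>\<^sub>L 'b"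
    and V :: "'n \<Rightarrow> 'd set" and lam mu k1 k3 :: real
  assumes da: "\<And>x. (a has_derivative blinfun_apply (f' x)) (at x)"
    and df: "\<And>x. (f' has_derivative blinfun_apply (f'' x)) (at x)"
    and cf: "continuous_on UNIV f''"
    and lam_pos: "lam > 0" and mu_pos: "mu > 0" and k1_pos: "k1 > 0" and k3_pos: "k3 > 0"
    and V_open: "\<And>i. open (V i)" and xr_in_V: "\<And>i. xr i \<in> V i"
    and V_orth: "\<And>i l x y. i \<noteq> l \<Longrightarrow> x \<in> V i \<Longrightarrow> y \<in> V l \<Longrightarrow> a x \<bullet> a y = 0"
    and hess: "\<And>i e. blinfun_diag (f'' (xr i)) e \<bullet> a (xr i) \<le> - k1 * (e \<bullet> e)"
    and mixed: "\<And>i v. k3 * (v \<bullet> v) \<le> blinfun_apply (f' (xr i)) v \<bullet> blinfun_apply (f' (xr i)) v"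
begin

lemma diag_inner_other_atom:
  assumes "i \<noteq> l" shows "blinfun_diag (f'' (xr i)) e \<bullet> a (xr l) = 0"
proof -
  have "\<forall>x\<in>V i. a x \<bullet> a (xr l) = 0" using V_orth[OF assms] xr_in_V by blast
  then show ?thesis
    unfolding blinfun_diag_def
    by (intro second_deriv_inner_eq_0_if_orthogonal_near[where f' = f' and f'' = f'' and p = "xr i" and V = "V i", OF da df V_open xr_in_V])
qed

lemma inj_xr: "inj xr"
proof (rule injI, rule ccontr)
  fix i l assume "xr i = xr l" "i \<noteq> l"
  obtain b :: 'd where "b \<in> Basis" using nonempty_Basis by blast
  then show False
    using hess[of i b] diag_inner_other_atom[OF \<open>i \<noteq> l\<close>, of b] \<open>xr i = xr l\<close> k1_pos by simp
qed

lemma fst_gan_step: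
  "fst (gan_step a xr lam eta g z) = fst z + eta *\<^sub>R ((\<Sum>i\<in>UNIV. (1 / real CARD('n)) *\<^sub>R a (xr i))
     - (\<Sum>j\<in>UNIV. (1 / real CARD('n)) *\<^sub>R a (snd z $ j)) - lam *\<^sub>R fst z)"
  unfolding gan_step_def by (simp add: case_prod_beta)

lemma snd_gan_step_nth:
  "snd (gan_step a xr lam eta g z) $ j
     = snd z $ j + (g * (1 / real CARD('n))) *\<^sub>R adjoint (blinfun_apply (f' (snd z $ j))) (fst z)"
  unfolding gan_step_def by (simp add: case_prod_beta grad_inner_eq_adjoint[OF da])

lemma fixed_point_theta:
  assumes eta: "eta > 0" and fp: "gan_step a xr lam eta g (\<theta>s, xgs) = (\<theta>s, xgs)"
  shows "lam *\<^sub>R \<theta>s = (\<Sum>i\<in>UNIV. (1 / real CARD('n)) *\<^sub>R a (xr i))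
                      - (\<Sum>j\<in>UNIV. (1 / real CARD('n)) *\<^sub>R a (xgs $ j))"
  using fst_gan_step[of eta g "(\<theta>s, xgs)"] arg_cong[OF fp, of fst] eta by simp

lemma collision_if_not_same_distr:
  assumes supp: "\<forall>j. xgs $ j \<in> range xr" and not_same: "\<not> same_distr xr xgs"
  shows "\<exists>i0 j1 j2. j1 \<noteq> j2 \<and> xgs $ j1 = xr i0 \<and> xgs $ j2 = xr i0"
proof (rule ccontr)
  assume no_collision: "\<not> ?thesis"
  have inj_xgs: "inj (\<lambda>j. xgs $ j)"
  proof (rule injI)
    fix j1 j2 assume "xgs $ j1 = xgs $ j2"
    moreover obtain i where "xgs $ j1 = xr i" using supp by blast
    ultimately show "j1 = j2" using no_collision by metis
  qed
  have "card (range (\<lambda>j. xgs $ j)) = card (range xr)"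
    using card_image[OF inj_xgs] card_image[OF inj_xr] by simp
  then have ranges: "range (\<lambda>j. xgs $ j) = range xr"
    using card_subset_eq[of "range xr" "range (\<lambda>j. xgs $ j)"] supp by auto
  have "card {j. xgs $ j = y} = card {i. xr i = y}" for y
  proof (cases "y \<in> range xr")
    case True
    then obtain i j where i: "y = xr i" and j: "y = xgs $ j" using ranges by (metis rangeE)
    have "{i'. xr i' = y} = {i}" using i inj_xr by (auto dest: injD)
    moreover have "{j'. xgs $ j' = y} = {j}" using j inj_xgs by (auto dest: injD)
    ultimately show ?thesis by simp
  next
    case False
    then have "{i'. xr i' = y} = {}" "{j'. xgs $ j' = y} = {}" using ranges by auto
    then show ?thesis by simp
  qed
  then show False using not_same unfolding same_distr_def by blast
qed

text \<open>Paired with the second derivative of \<open>a\<close> at \<open>p = xr i0\<close>, only the atom \<open>p\<close> survives in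
  \<open>\<lambda> \<theta>s\<close>, with weight \<open>(1 - m) / N\<close> where \<open>m \<ge> 2\<close> generated points sit on \<open>p\<close>.\<close>

lemma diag_inner_theta_ge_at_collision:
  assumes eta: "eta > 0" and fp: "gan_step a xr lam eta g (\<theta>s, xgs) = (\<theta>s, xgs)"
    and supp: "\<forall>j. xgs $ j \<in> range xr"
    and coll: "j1 \<noteq> j2" "xgs $ j1 = xr i0" "xgs $ j2 = xr i0"
  shows "blinfun_diag (f'' (xr i0)) e \<bullet> \<theta>s \<ge> k1 / (lam * real CARD('n)) * (e \<bullet> e)"
proof -
  define N where "N = real CARD('n)"
  define p where "p = xr i0"
  define m where "m = card {j. xgs $ j = p}"
  define s where "s = blinfun_diag (f'' p) e \<bullet> a p"
  have N: "N > 0" by (simp add: N_def)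
  have "card {j1, j2} \<le> m"
    unfolding m_def using coll by (intro card_mono) (auto simp: p_def)
  then have m2: "m \<ge> 2" using coll by simp
  have s: "s \<le> - k1 * (e \<bullet> e)" unfolding s_def p_def by (rule hess)
  have "blinfun_diag (f'' p) e \<bullet> a (xr i) = (if i = i0 then s else 0)" for i
    using diag_inner_other_atom[of i0 i e] by (auto simp: s_def p_def)
  then have sum_r: "(\<Sum>i\<in>UNIV. blinfun_diag (f'' p) e \<bullet> a (xr i)) = s" by simp
  have "blinfun_diag (f'' p) e \<bullet> a (xgs $ j) = (if xgs $ j = p then s else 0)" for j
  proof -
    obtain i where "xgs $ j = xr i" using supp by blast
    then show ?thesis using diag_inner_other_atom[of i0 i e] by (auto simp: s_def p_def)
  qed
  then have "(\<Sum>j\<in>UNIV. blinfun_diag (f'' p) e \<bullet> a (xgs $ j)) = (\<Sum>j\<in>{j. xgs $ j = p}. s)"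
    by (simp add: sum.If_cases)
  then have sum_g: "(\<Sum>j\<in>UNIV. blinfun_diag (f'' p) e \<bullet> a (xgs $ j)) = real m * s"
    by (simp add: m_def)
  have "lam * (blinfun_diag (f'' p) e \<bullet> \<theta>s) = blinfun_diag (f'' p) e \<bullet> (lam *\<^sub>R \<theta>s)" by simp
  also have "\<dots> = (1 / N) * (\<Sum>i\<in>UNIV. blinfun_diag (f'' p) e \<bullet> a (xr i))
                 - (1 / N) * (\<Sum>j\<in>UNIV. blinfun_diag (f'' p) e \<bullet> a (xgs $ j))"
    unfolding fixed_point_theta[OF eta fp]
    by (simp add: N_def inner_diff_right inner_sum_right sum_distrib_left)
  also have "\<dots> = (real m - 1) * (- s) / N" using N by (simp add: sum_r sum_g field_simps)
  also have "\<dots> \<ge> 1 * (k1 * (e \<bullet> e)) / N"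
    using m2 s k1_pos N by (intro divide_right_mono mult_mono) auto
  finally show ?thesis
    using lam_pos N by (simp add: N_def p_def field_simps)
qed

lemma collision_gap_expands:
  assumes eta: "eta > 0" and fp: "gan_step a xr lam eta (mu * eta) (\<theta>s, xgs) = (\<theta>s, xgs)"
    and supp: "\<forall>j. xgs $ j \<in> range xr"
    and coll: "j1 \<noteq> j2" "xgs $ j1 = xr i0" "xgs $ j2 = xr i0"
  defines "g \<equiv> \<lambda>z :: 'b \<times> ('d, 'n) vec. snd z $ j1 - snd z $ j2"
  shows "\<exists>\<rho>>0. \<exists>c>1. \<forall>z. dist z (\<theta>s, xgs) < \<rho> \<longrightarrow>
           c * norm (g z) \<le> norm (g (gan_step a xr lam eta (mu * eta) z)) \<and> norm (g z) \<le> 2 * \<rho>"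
proof -
  define N where "N = real CARD('n)"
  define p where "p = xr i0"
  define \<alpha> where "\<alpha> = k1 / (2 * lam * N)"
  define \<kappa> where "\<kappa> = mu * eta * (1 / N)"
  have N: "N > 0" by (simp add: N_def)
  have al: "\<alpha> > 0" using k1_pos lam_pos N by (simp add: \<alpha>_def)
  have ka: "\<kappa> > 0" using mu_pos eta N by (simp add: \<kappa>_def)
  have "blinfun_diag (f'' p) e \<bullet> \<theta>s \<ge> 2 * \<alpha> * (e \<bullet> e)" for e
    using diag_inner_theta_ge_at_collision[OF eta fp supp coll, of e]
    by (simp add: \<alpha>_def N_def p_def)
  then obtain \<rho> where rho: "\<rho> > 0" and mono: "\<And>\<theta> x1 x2. dist \<theta> \<theta>s < \<rho> \<and> dist x1 p < \<rho> \<and> dist x2 p < \<rho> \<Longrightarrow>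
     blinfun_apply (f' x1) (x1 - x2) \<bullet> \<theta> - blinfun_apply (f' x2) (x1 - x2) \<bullet> \<theta> \<ge> \<alpha> * ((x1 - x2) \<bullet> (x1 - x2))"
    using deriv_inner_strongly_monotone_near[OF df cf al] by blast
  have "(1 + \<kappa> * \<alpha>) * norm (g z) \<le> norm (g (gan_step a xr lam eta (mu * eta) z)) \<and> norm (g z) \<le> 2 * \<rho>"
    if z: "dist z (\<theta>s, xgs) < \<rho>" for z
  proof -
    have "dist (snd z $ j) (xgs $ j) < \<rho>" for j
      using z dist_snd_le[of z "(\<theta>s, xgs)"] dist_vec_nth_le[of "snd z" j xgs] by simp
    then have near: "dist (fst z) \<theta>s < \<rho> \<and> dist (snd z $ j1) p < \<rho> \<and> dist (snd z $ j2) p < \<rho>"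
      using z dist_fst_le[of z "(\<theta>s, xgs)"] coll by (metis fst_conv le_less_trans p_def)
    have "g (gan_step a xr lam eta (mu * eta) z) = g z + \<kappa> *\<^sub>R
        (adjoint (blinfun_apply (f' (snd z $ j1))) (fst z) - adjoint (blinfun_apply (f' (snd z $ j2))) (fst z))"
      by (simp add: g_def snd_gan_step_nth \<kappa>_def N_def algebra_simps)
    then have "g (gan_step a xr lam eta (mu * eta) z) \<bullet> g z = g z \<bullet> g z + \<kappa> *
        (blinfun_apply (f' (snd z $ j1)) (g z) \<bullet> fst z - blinfun_apply (f' (snd z $ j2)) (g z) \<bullet> fst z)"
      by (simp add: inner_add_left inner_diff_left inner_commute[of "adjoint _ _"] adjoint_blinfun_inner)
    also have "\<dots> \<ge> g z \<bullet> g z + \<kappa> * (\<alpha> * (g z \<bullet> g z))"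
      using mono[OF near] ka by (simp add: g_def)
    finally have "(1 + \<kappa> * \<alpha>) * norm (g z) * norm (g z) \<le> norm (g (gan_step a xr lam eta (mu * eta) z)) * norm (g z)"
      using norm_cauchy_schwarz[of "g (gan_step a xr lam eta (mu * eta) z)" "g z"]
      by (simp add: algebra_simps dot_square_norm power2_eq_square)
    then have "(1 + \<kappa> * \<alpha>) * norm (g z) \<le> norm (g (gan_step a xr lam eta (mu * eta) z))"
      by (cases "norm (g z) = 0") (auto simp: mult_le_cancel_right)
    moreover have "norm (g z) \<le> 2 * \<rho>"
      using near norm_triangle_ineq4[of "snd z $ j1 - p" "snd z $ j2 - p"]
      by (simp add: g_def dist_norm)
    ultimately show ?thesis by blast
  qed
  moreover have "1 + \<kappa> * \<alpha> > 1" using ka al by simp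
  ultimately show ?thesis using rho by blast
qed

lemma not_locally_stable_if_collision:
  assumes eta: "eta > 0" and fp: "gan_step a xr lam eta (mu * eta) (\<theta>s, xgs) = (\<theta>s, xgs)"
    and supp: "\<forall>j. xgs $ j \<in> range xr"
    and coll: "j1 \<noteq> j2" "xgs $ j1 = xr i0" "xgs $ j2 = xr i0"
  shows "\<not> locally_stable (gan_step a xr lam eta (mu * eta)) (\<theta>s, xgs)"
proof -
  define g where "g z = snd z $ j1 - snd z $ j2" for z :: "'b \<times> ('d, 'n) vec"
  obtain \<rho> c where "\<rho> > 0" "c > 1" and expand: "\<And>z. dist z (\<theta>s, xgs) < \<rho> \<Longrightarrow>
      c * norm (g z) \<le> norm (g (gan_step a xr lam eta (mu * eta) z)) \<and> norm (g z) \<le> 2 * \<rho>"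
    using collision_gap_expands[OF eta fp supp coll] unfolding g_def by blast
  show ?thesis
  proof (rule not_locally_stable_if_expanding[where g = g, OF \<open>c > 1\<close> \<open>\<rho> > 0\<close>])
    fix \<delta> :: real assume dl: "\<delta> > 0"
    obtain b :: 'd where b: "b \<in> Basis" using nonempty_Basis by blast
    define z where "z = (\<theta>s, \<chi> j. if j = j1 then xgs $ j + (\<delta> / 2) *\<^sub>R b else xgs $ j)"
    have "dist z (\<theta>s, xgs) \<le> (\<Sum>j\<in>UNIV. dist (snd z $ j) (xgs $ j))"
      unfolding z_def dist_Pair_Pair dist_vec_def by (simp add: L2_set_le_sum)
    also have "\<dots> = (\<Sum>j\<in>UNIV. if j = j1 then \<delta> / 2 else 0)"
      using b dl by (intro sum.cong) (auto simp: z_def dist_norm)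
    finally have "dist z (\<theta>s, xgs) < \<delta>" using dl by simp
    moreover have "g z \<noteq> 0" using coll b dl by (auto simp: g_def z_def nonzero_Basis)
    ultimately show "\<exists>z. dist z (\<theta>s, xgs) < \<delta> \<and> g z \<noteq> 0" by blast
  qed (use expand in auto)
qed

end

lemma sum_comp_eq_sum_card_fibres:
  fixes f :: "'n::finite \<Rightarrow> 'd" and h :: "'d \<Rightarrow> 'b::real_vector"
  assumes "finite T" "range f \<subseteq> T"
  shows "(\<Sum>j\<in>UNIV. h (f j)) = (\<Sum>y\<in>T. real (card {j. f j = y}) *\<^sub>R h y)"
proof -
  have "(\<Sum>j\<in>UNIV. h (f j)) = (\<Sum>y\<in>T. \<Sum>j\<in>{j\<in>UNIV. f j = y}. h (f j))"
    using assms by (intro sum.group[symmetric]) auto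
  also have "\<dots> = (\<Sum>y\<in>T. \<Sum>j\<in>{j. f j = y}. h y)"
    by (intro sum.cong) auto
  finally show ?thesis by (simp add: sum_constant_scaleR)
qed

lemma same_distr_sum_eq:
  fixes h :: "'d \<Rightarrow> 'b::real_vector"
  assumes "same_distr xr xg"
  shows "(\<Sum>i\<in>UNIV. h (xr i)) = (\<Sum>j\<in>UNIV. h (xg $ j))"
proof -
  define T where "T = range xr \<union> range (\<lambda>j. xg $ j)"
  have "finite T" by (simp add: T_def)
  then show ?thesis
    using sum_comp_eq_sum_card_fibres[of T xr h] sum_comp_eq_sum_card_fibres[of T "\<lambda>j. xg $ j" h]
      assms unfolding same_distr_def T_def by simp
qed

lemma norm_vec_le_sum_norm_nth: "norm (x :: ('a::real_normed_vector, 'n::finite) vec) \<le> (\<Sum>j\<in>UNIV. norm (x $ j))"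
  unfolding norm_vec_def by (rule L2_set_le_sum) simp

lemma eventually_first_order_bounds:
  assumes da: "(a has_derivative blinfun_apply (f' x0)) (at x0)" and cont: "isCont f' x0"
    and e: "\<epsilon> > 0"
  shows "eventually (\<lambda>x. norm (a x - a x0 - blinfun_apply (f' x0) (x - x0)) \<le> \<epsilon> * norm (x - x0)
           \<and> norm (f' x - f' x0) < \<epsilon>) (nhds x0)"
proof -
  obtain d1 where "d1 > 0" and "\<And>x. norm (x - x0) < d1 \<Longrightarrow>
      norm (a x - a x0 - blinfun_apply (f' x0) (x - x0)) \<le> \<epsilon> * norm (x - x0)"
    using da e unfolding has_derivative_at_alt by blast
  moreover obtain d2 where "d2 > 0" and "\<And>x. dist x x0 < d2 \<Longrightarrow> dist (f' x) (f' x0) < \<epsilon>"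
    using cont e unfolding continuous_at_eps_delta by blast
  ultimately show ?thesis
    unfolding eventually_nhds_metric by (intro exI[of _ "min d1 d2"]) (auto simp: dist_norm)
qed

locale gan_matched = gan_dynamics a xr f' f'' V lam mu k1 k3
  for a :: "'d::euclidean_space \<Rightarrow> 'b::euclidean_space"
    and xr :: "'n::finite \<Rightarrow> 'd"
    and f' f'' V lam mu k1 k3 +
  fixes xgs :: "('d, 'n) vec"
  assumes supp: "\<forall>j. xgs $ j \<in> range xr" and same: "same_distr xr xgs"
begin

definition "N = real CARD('n)"

lemma N_pos: "N > 0" by (simp add: N_def)

lemma fixed_point_theta_eq_0:
  assumes "eta > 0" and "gan_step a xr lam eta g (\<theta>s, xgs) = (\<theta>s, xgs)"
  shows "\<theta>s = 0"
proof -
  have "lam *\<^sub>R \<theta>s = 0"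
    using fixed_point_theta[OF assms] same_distr_sum_eq[OF same, of "\<lambda>x. (1 / N) *\<^sub>R a x"]
    by (simp add: N_def)
  then show ?thesis using lam_pos by simp
qed

lemma inj_xgs: "inj (\<lambda>j. xgs $ j)"
proof (rule injI, rule ccontr)
  fix j1 j2 assume eq: "xgs $ j1 = xgs $ j2" and ne: "j1 \<noteq> j2"
  obtain i where i: "xgs $ j1 = xr i" using supp by blast
  have "{i'. xr i' = xr i} = {i}" using inj_xr by (simp add: inj_eq)
  then have "card {j. xgs $ j = xr i} = 1"
    using same[unfolded same_distr_def, rule_format, of "xr i"] by simp
  moreover have "card {j1, j2} \<le> card {j. xgs $ j = xr i}"
    using eq i by (intro card_mono) auto
  ultimately show False using ne by simp
qed

lemma first_derivs_orthogonal:
  assumes "j \<noteq> l"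
  shows "blinfun_apply (f' (xgs $ j)) v \<bullet> blinfun_apply (f' (xgs $ l)) w = 0"
proof -
  obtain i i' where i: "xgs $ j = xr i" and i': "xgs $ l = xr i'" using supp by blast
  then have "i \<noteq> i'" using assms inj_xgs by (metis injD)
  then have "\<forall>x\<in>V i. \<forall>y\<in>V i'. a x \<bullet> a y = 0" using V_orth by blast
  then show ?thesis
    unfolding i i' by (rule first_derivs_orthogonal_if_orthogonal_near[OF da V_open xr_in_V V_open xr_in_V])
qed

text \<open>\<open>Jac\<close> is the derivative of the generated mean feature \<open>(1/N) \<Sum>j a (x j)\<close> at \<open>xgs\<close>, and
  \<open>Jac_adj\<close> its adjoint; they are the off-diagonal blocks of the linearized dynamics.\<close>

definition Jac :: "('d, 'n) vec \<Rightarrow> 'b" where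
  "Jac w = (\<Sum>j\<in>UNIV. (1 / N) *\<^sub>R blinfun_apply (f' (xgs $ j)) (w $ j))"

definition Jac_adj :: "'b \<Rightarrow> ('d, 'n) vec" where
  "Jac_adj u = (\<chi> j. (1 / N) *\<^sub>R adjoint (blinfun_apply (f' (xgs $ j))) u)"

definition "Jac_bound = 1 + (\<Sum>j\<in>UNIV. norm (f' (xgs $ j)))"

lemma Jac_bound_ge_1: "Jac_bound \<ge> 1"
  by (simp add: Jac_bound_def sum_nonneg)

lemma Jac_add: "Jac (w + w') = Jac w + Jac w'"
  by (simp add: Jac_def blinfun.add_right scaleR_add_right sum.distrib)

lemma Jac_scaleR: "Jac (c *\<^sub>R w) = c *\<^sub>R Jac w"
  by (simp add: Jac_def blinfun.scaleR_right scaleR_sum_right)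

lemma Jac_inner_eq: "Jac w \<bullet> u = w \<bullet> Jac_adj u"
  by (simp add: Jac_def Jac_adj_def inner_vec_def inner_sum_left adjoint_blinfun_inner)

lemma norm_Jac_le: "norm (Jac w) \<le> Jac_bound * norm w"
proof -
  have "norm (Jac w) \<le> (\<Sum>j\<in>UNIV. norm ((1 / N) *\<^sub>R blinfun_apply (f' (xgs $ j)) (w $ j)))"
    unfolding Jac_def by (rule norm_sum)
  also have "\<dots> \<le> (\<Sum>j\<in>UNIV. norm (f' (xgs $ j)) * norm w)"
  proof (rule sum_mono)
    fix j
    have "N \<ge> 1" by (simp add: N_def)
    then have "norm ((1 / N) *\<^sub>R blinfun_apply (f' (xgs $ j)) (w $ j))
        = (1 / N) * norm (blinfun_apply (f' (xgs $ j)) (w $ j))" by simp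
    also have "\<dots> \<le> 1 * (norm (f' (xgs $ j)) * norm (w $ j))"
      using \<open>N \<ge> 1\<close> by (intro mult_mono norm_blinfun) auto
    also have "\<dots> \<le> norm (f' (xgs $ j)) * norm w"
      by (simp add: mult_left_mono Finite_Cartesian_Product.norm_nth_le)
    finally show "norm ((1 / N) *\<^sub>R blinfun_apply (f' (xgs $ j)) (w $ j)) \<le> norm (f' (xgs $ j)) * norm w" .
  qed
  also have "\<dots> \<le> Jac_bound * norm w"
    by (simp add: Jac_bound_def sum_distrib_right[symmetric] mult_right_mono)
  finally show ?thesis .
qed

lemma norm_Jac_adj_le: "norm (Jac_adj u) \<le> Jac_bound * norm u"
proof -
  have "norm (Jac_adj u) * norm (Jac_adj u) = Jac (Jac_adj u) \<bullet> u"
    by (simp add: Jac_inner_eq flip: dot_square_norm power2_eq_square)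
  also have "\<dots> \<le> norm (Jac (Jac_adj u)) * norm u" by (rule norm_cauchy_schwarz)
  also have "\<dots> \<le> Jac_bound * norm (Jac_adj u) * norm u" by (intro mult_right_mono norm_Jac_le) auto
  finally have "norm (Jac_adj u) * norm (Jac_adj u) \<le> (Jac_bound * norm u) * norm (Jac_adj u)"
    by (simp add: mult_ac)
  then show ?thesis
    using Jac_bound_ge_1 by (cases "norm (Jac_adj u) = 0") (auto simp: mult_le_cancel_right)
qed

lemma Jac_coercive: "Jac w \<bullet> Jac w \<ge> (k3 / N\<^sup>2) * (w \<bullet> w)"
proof -
  define c where "c j = blinfun_apply (f' (xgs $ j)) (w $ j) \<bullet> blinfun_apply (f' (xgs $ j)) (w $ j)" for j
  have "Jac w \<bullet> Jac w = (\<Sum>l\<in>UNIV. \<Sum>j\<in>UNIV. (1 / N\<^sup>2) *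
      (blinfun_apply (f' (xgs $ j)) (w $ j) \<bullet> blinfun_apply (f' (xgs $ l)) (w $ l)))"
    by (simp add: Jac_def inner_sum_left inner_sum_right power2_eq_square sum_divide_distrib)
  also have "\<dots> = (\<Sum>j\<in>UNIV. \<Sum>l\<in>UNIV. (1 / N\<^sup>2) *
      (blinfun_apply (f' (xgs $ j)) (w $ j) \<bullet> blinfun_apply (f' (xgs $ l)) (w $ l)))"
    by (rule sum.swap)
  also have "\<dots> = (\<Sum>j\<in>UNIV. (1 / N\<^sup>2) * c j)"
  proof (rule sum.cong[OF refl])
    fix j
    have "(\<Sum>l\<in>UNIV. (1 / N\<^sup>2) * (blinfun_apply (f' (xgs $ j)) (w $ j) \<bullet> blinfun_apply (f' (xgs $ l)) (w $ l)))
       = (\<Sum>l\<in>UNIV. if l = j then (1 / N\<^sup>2) * c j else 0)"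
      by (rule sum.cong[OF refl]) (auto simp: c_def first_derivs_orthogonal)
    then show "(\<Sum>l\<in>UNIV. (1 / N\<^sup>2) * (blinfun_apply (f' (xgs $ j)) (w $ j) \<bullet> blinfun_apply (f' (xgs $ l)) (w $ l)))
       = (1 / N\<^sup>2) * c j" by simp
  qed
  also have "\<dots> \<ge> (\<Sum>j\<in>UNIV. (1 / N\<^sup>2) * (k3 * (w $ j \<bullet> w $ j)))"
  proof (rule sum_mono)
    fix j
    obtain i where i: "xgs $ j = xr i" using supp by blast
    show "(1 / N\<^sup>2) * (k3 * (w $ j \<bullet> w $ j)) \<le> (1 / N\<^sup>2) * c j"
      unfolding c_def i by (intro mult_left_mono mixed) auto
  qed
  finally show ?thesis by (simp add: inner_vec_def sum_distrib_left)
qed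

definition lin_step :: "real \<Rightarrow> 'b \<times> ('d, 'n) vec \<Rightarrow> 'b \<times> ('d, 'n) vec" where
  "lin_step eta v = (fst v - eta *\<^sub>R (lam *\<^sub>R fst v + Jac (snd v)), snd v + (mu * eta) *\<^sub>R Jac_adj (fst v))"

text \<open>The \<open>x\<close>-block of \<open>lin_step\<close> has no damping of its own, so \<open>\<mu> |u|\<^sup>2 + |w|\<^sup>2\<close> is not a
  strict Lyapunov function; the cross term \<open>2 \<gamma> u \<bullet> Jac w\<close> transfers the decay of \<open>u\<close> to \<open>w\<close>
  through the coercivity of \<open>Jac\<close>. The weight \<open>\<gamma>\<close> is chosen so that the \<open>\<lambda>\<close>-terms cancel
  (\<open>gam_eq\<close>) and the form stays positive definite (\<open>gam_small\<close>).\<close>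

definition "gam = mu * lam / (2 * mu * Jac_bound\<^sup>2 + lam\<^sup>2)"

definition lyap :: "'b \<times> ('d, 'n) vec \<Rightarrow> real" where
  "lyap v = mu * (fst v \<bullet> fst v) + snd v \<bullet> snd v + 2 * gam * (fst v \<bullet> Jac (snd v))"

definition "decay = min (mu * lam) (gam * k3 / N\<^sup>2)"

definition "second_order_bound = (mu + gam * mu) * (2 * lam\<^sup>2 + 2 * Jac_bound\<^sup>2)
  + mu\<^sup>2 * Jac_bound\<^sup>2 + gam * mu * Jac_bound ^ 4 + 1"

definition "eta_max = decay / (2 * second_order_bound)"

lemma gam_denom_pos: "2 * mu * Jac_bound\<^sup>2 + lam\<^sup>2 > 0"
  using mu_pos lam_pos by (intro add_nonneg_pos) auto

lemma gam_pos: "gam > 0"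
  using mu_pos lam_pos gam_denom_pos by (simp add: gam_def)

lemma gam_eq: "gam * (2 * mu * Jac_bound\<^sup>2 + lam\<^sup>2) = mu * lam"
  using gam_denom_pos by (simp add: gam_def)

lemma gam_small: "4 * gam\<^sup>2 * Jac_bound\<^sup>2 \<le> mu"
proof -
  define D where "D = 2 * mu * Jac_bound\<^sup>2 + lam\<^sup>2"
  have D: "D > 0" using gam_denom_pos by (simp add: D_def)
  have "D\<^sup>2 = 4 * mu\<^sup>2 * Jac_bound ^ 4 + 4 * mu * Jac_bound\<^sup>2 * lam\<^sup>2 + lam ^ 4"
    by (simp add: D_def power2_eq_square power4_eq_xxxx algebra_simps)
  then have "4 * mu * lam\<^sup>2 * Jac_bound\<^sup>2 \<le> D\<^sup>2" by (simp add: algebra_simps)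
  then have "4 * (mu * lam)\<^sup>2 * Jac_bound\<^sup>2 \<le> mu * D\<^sup>2"
    using mu_pos mult_left_mono[of "4 * mu * lam\<^sup>2 * Jac_bound\<^sup>2" "D\<^sup>2" mu]
    by (simp add: power2_eq_square algebra_simps)
  moreover have "(mu * lam)\<^sup>2 = gam\<^sup>2 * D\<^sup>2"
    unfolding D_def gam_eq[symmetric] by (simp add: power_mult_distrib)
  then have "(4 * gam\<^sup>2 * Jac_bound\<^sup>2) * D\<^sup>2 = 4 * (mu * lam)\<^sup>2 * Jac_bound\<^sup>2"
    by (simp add: algebra_simps)
  ultimately have "(4 * gam\<^sup>2 * Jac_bound\<^sup>2) * D\<^sup>2 \<le> mu * D\<^sup>2"
    by linarith
  then show ?thesis using D by simp
qed

lemma decay_pos: "decay > 0"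
  using mu_pos lam_pos gam_pos k3_pos N_pos by (simp add: decay_def)

lemma second_order_bound_pos: "second_order_bound > 0"
proof -
  have "0 \<le> (mu + gam * mu) * (2 * lam\<^sup>2 + 2 * Jac_bound\<^sup>2) + mu\<^sup>2 * Jac_bound\<^sup>2 + gam * mu * Jac_bound ^ 4"
    using mu_pos gam_pos by (intro add_nonneg_nonneg mult_nonneg_nonneg) auto
  then show ?thesis by (simp add: second_order_bound_def)
qed

lemma eta_max_pos: "eta_max > 0"
  using decay_pos second_order_bound_pos by (simp add: eta_max_def)

lemma abs_inner_Jac_le: "\<bar>u \<bullet> Jac w\<bar> \<le> Jac_bound * (norm u * norm w)"
proof -
  have "\<bar>u \<bullet> Jac w\<bar> \<le> norm u * norm (Jac w)" by (rule Cauchy_Schwarz_ineq2)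
  also have "\<dots> \<le> norm u * (Jac_bound * norm w)" by (intro mult_left_mono norm_Jac_le) auto
  finally show ?thesis by (simp add: mult_ac)
qed

lemma abs_lyap_cross_le: "\<bar>2 * gam * (u \<bullet> Jac w)\<bar> \<le> mu / 2 * (u \<bullet> u) + 1 / 2 * (w \<bullet> w)"
proof -
  define p where "p = norm u"
  define q where "q = norm w"
  have "0 \<le> 1 / 2 * (q - 2 * gam * Jac_bound * p)\<^sup>2 + (mu / 2 - 2 * gam\<^sup>2 * Jac_bound\<^sup>2) * p\<^sup>2"
    using gam_small by (intro add_nonneg_nonneg mult_nonneg_nonneg) auto
  also have "\<dots> = mu / 2 * p\<^sup>2 + 1 / 2 * q\<^sup>2 - 2 * gam * (Jac_bound * p * q)"
    by (simp add: power2_eq_square algebra_simps)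
  finally have "2 * gam * (Jac_bound * p * q) \<le> mu / 2 * p\<^sup>2 + 1 / 2 * q\<^sup>2" by simp
  moreover have "\<bar>2 * gam * (u \<bullet> Jac w)\<bar> \<le> 2 * gam * (Jac_bound * p * q)"
    using abs_inner_Jac_le[of u w] gam_pos by (simp add: abs_mult p_def q_def mult_ac)
  ultimately show ?thesis by (simp add: p_def q_def dot_square_norm)
qed

lemma norm_prod_sq: "(norm v)\<^sup>2 = fst v \<bullet> fst v + snd v \<bullet> snd v"
  by (simp add: norm_prod_def power2_norm_eq_inner)

lemma lyap_ge: "min mu 1 / 2 * (norm v)\<^sup>2 \<le> lyap v"
proof -
  have "min mu 1 / 2 * (norm v)\<^sup>2 \<le> mu / 2 * (fst v \<bullet> fst v) + 1 / 2 * (snd v \<bullet> snd v)"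
    unfolding norm_prod_sq distrib_left by (intro add_mono mult_right_mono) auto
  then show ?thesis
    using abs_lyap_cross_le[of "fst v" "snd v"] by (simp add: lyap_def)
qed

lemma lyap_le: "lyap v \<le> 3 / 2 * max mu 1 * (norm v)\<^sup>2"
proof -
  have "3 / 2 * mu * (fst v \<bullet> fst v) + 3 / 2 * (snd v \<bullet> snd v) \<le> 3 / 2 * max mu 1 * (norm v)\<^sup>2"
    unfolding norm_prod_sq distrib_left by (intro add_mono mult_right_mono) auto
  then show ?thesis
    using abs_lyap_cross_le[of "fst v" "snd v"] by (simp add: lyap_def)
qed

lemma norm_lin_step_le:
  assumes eta: "eta \<ge> 0"
  shows "norm (lin_step eta v) \<le> (2 + eta * lam + eta * Jac_bound + mu * eta * Jac_bound) * norm v"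
proof -
  define u where "u = fst v"
  define w where "w = snd v"
  have nu: "norm u \<le> norm v" and nw: "norm w \<le> norm v"
    using norm_fst_le[of u w] norm_snd_le[of w u] by (simp_all add: u_def w_def)
  have "norm (fst (lin_step eta v)) \<le> norm u + eta * (lam * norm u + Jac_bound * norm w)"
    using norm_triangle_ineq4[of u "eta *\<^sub>R (lam *\<^sub>R u + Jac w)"]
      norm_triangle_ineq[of "lam *\<^sub>R u" "Jac w"] norm_Jac_le[of w] lam_pos eta
      mult_left_mono[of "norm (lam *\<^sub>R u + Jac w)" "lam * norm u + Jac_bound * norm w" eta]
    by (simp add: lin_step_def u_def w_def)
  also have "\<dots> \<le> (1 + eta * lam + eta * Jac_bound) * norm v"
    using nu nw eta lam_pos Jac_bound_ge_1
    by (simp add: algebra_simps add_mono mult_left_mono mult_mono)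
  finally have 1: "norm (fst (lin_step eta v)) \<le> (1 + eta * lam + eta * Jac_bound) * norm v" .
  have "norm (snd (lin_step eta v)) \<le> norm w + mu * eta * norm (Jac_adj u)"
    using norm_triangle_ineq[of w "(mu * eta) *\<^sub>R Jac_adj u"] mu_pos eta
    by (simp add: lin_step_def u_def w_def abs_mult)
  also have "\<dots> \<le> norm w + mu * eta * (Jac_bound * norm u)"
    using norm_Jac_adj_le[of u] mu_pos eta by (intro add_left_mono mult_left_mono) auto
  also have "\<dots> \<le> (1 + mu * eta * Jac_bound) * norm v"
    using nu nw eta mu_pos Jac_bound_ge_1
    by (simp add: algebra_simps add_mono mult_left_mono mult_mono)
  finally have 2: "norm (snd (lin_step eta v)) \<le> (1 + mu * eta * Jac_bound) * norm v" .
  show ?thesis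
    using norm_Pair_le[of "fst (lin_step eta v)" "snd (lin_step eta v)"] 1 2
    by (simp add: algebra_simps)
qed

definition "lyap_incr_const = 2 * mu + 2 + 4 * gam * Jac_bound"

lemma lyap_incr_const_pos: "lyap_incr_const > 0"
  using mu_pos gam_pos Jac_bound_ge_1 by (simp add: lyap_incr_const_def add_pos_nonneg)

lemma lyap_increment_le:
  "lyap (x + y) - lyap x \<le> lyap_incr_const * (norm x * norm y + (norm y)\<^sup>2)"
proof -
  define ux where "ux = fst x"
  define wx where "wx = snd x"
  define uy where "uy = fst y"
  define wy where "wy = snd y"
  define nx where "nx = norm x"
  define ny where "ny = norm y"
  have nx: "norm ux \<le> nx" "norm wx \<le> nx"
    using norm_fst_le[of ux wx] norm_snd_le[of wx ux] by (simp_all add: ux_def wx_def nx_def)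
  have ny: "norm uy \<le> ny" "norm wy \<le> ny"
    using norm_fst_le[of uy wy] norm_snd_le[of wy uy] by (simp_all add: uy_def wy_def ny_def)
  have nn: "nx \<ge> 0" "ny \<ge> 0" by (simp_all add: nx_def ny_def)
  have ip: "p \<bullet> q \<le> A * B" if "norm p \<le> A" "norm q \<le> B" for p q :: "'z::real_inner" and A B
    using norm_cauchy_schwarz[of p q] mult_mono[OF that order_trans[OF norm_ge_zero that(1)] norm_ge_zero]
    by simp
  have jb: "p \<bullet> Jac q \<le> Jac_bound * (A * B)" if "norm p \<le> A" "norm q \<le> B" for p q A B
  proof -
    have "norm p * norm q \<le> A * B"
      using mult_mono[OF that order_trans[OF norm_ge_zero that(1)] norm_ge_zero] .
    then have "Jac_bound * (norm p * norm q) \<le> Jac_bound * (A * B)"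
      using Jac_bound_ge_1 by simp
    then show ?thesis using abs_inner_Jac_le[of p q] by linarith
  qed
  have "lyap (x + y) - lyap x = mu * (2 * (ux \<bullet> uy)) + mu * (uy \<bullet> uy) + 2 * (wx \<bullet> wy) + wy \<bullet> wy
      + 2 * gam * (ux \<bullet> Jac wy) + 2 * gam * (uy \<bullet> Jac wx) + 2 * gam * (uy \<bullet> Jac wy)"
    by (simp add: lyap_def ux_def wx_def uy_def wy_def Jac_add inner_simps inner_commute algebra_simps)
  also have "\<dots> \<le> mu * (2 * (nx * ny)) + mu * (ny * ny) + 2 * (nx * ny) + ny * ny
      + 2 * gam * (Jac_bound * (nx * ny)) + 2 * gam * (Jac_bound * (ny * nx)) + 2 * gam * (Jac_bound * (ny * ny))"
    using mu_pos gam_pos ip[OF nx(1) ny(1)] ip[OF ny(1) ny(1)] ip[OF nx(2) ny(2)] ip[OF ny(2) ny(2)]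
      jb[OF nx(1) ny(2)] jb[OF ny(1) nx(2)] jb[OF ny(1) ny(2)]
    by (intro add_mono mult_left_mono) auto
  also have "\<dots> \<le> lyap_incr_const * (nx * ny) + lyap_incr_const * (ny * ny)"
    using nn mu_pos gam_pos Jac_bound_ge_1
    by (simp add: lyap_incr_const_def algebra_simps add_mono mult_right_mono)
  finally show ?thesis by (simp add: nx_def ny_def power2_eq_square algebra_simps)
qed

definition lyap_rate1 :: "'b \<Rightarrow> ('d, 'n) vec \<Rightarrow> real" where
  "lyap_rate1 u w = - 2 * mu * lam * (u \<bullet> u) + 2 * gam * mu * (Jac_adj u \<bullet> Jac_adj u)
     - 2 * gam * lam * (u \<bullet> Jac w) - 2 * gam * (Jac w \<bullet> Jac w)"

definition lyap_rate2 :: "'b \<Rightarrow> ('d, 'n) vec \<Rightarrow> real" where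
  "lyap_rate2 u w = mu * ((lam *\<^sub>R u + Jac w) \<bullet> (lam *\<^sub>R u + Jac w))
     + mu\<^sup>2 * (Jac_adj u \<bullet> Jac_adj u) - 2 * gam * mu * ((lam *\<^sub>R u + Jac w) \<bullet> Jac (Jac_adj u))"

lemma lyap_lin_step:
  "lyap (lin_step eta (u, w)) = lyap (u, w) + eta * lyap_rate1 u w + eta\<^sup>2 * lyap_rate2 u w"
proof -
  define P where "P = lam *\<^sub>R u + Jac w"
  define Q where "Q = Jac_adj u"
  have wQ: "w \<bullet> Q = u \<bullet> Jac w" using Jac_inner_eq[of w u] by (simp add: Q_def inner_commute)
  have uJQ: "u \<bullet> Jac Q = Q \<bullet> Q" using Jac_inner_eq[of Q u] by (simp add: Q_def inner_commute)
  have LL: "lin_step eta (u, w) = (u - eta *\<^sub>R P, w + (mu * eta) *\<^sub>R Q)"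
    by (simp add: lin_step_def P_def Q_def)
  have 1: "(u - eta *\<^sub>R P) \<bullet> (u - eta *\<^sub>R P) = u \<bullet> u - 2 * eta * (lam * (u \<bullet> u) + u \<bullet> Jac w)
      + eta\<^sup>2 * (P \<bullet> P)"
    by (simp add: P_def inner_simps inner_commute power2_eq_square algebra_simps)
  have 2: "(w + (mu * eta) *\<^sub>R Q) \<bullet> (w + (mu * eta) *\<^sub>R Q)
      = w \<bullet> w + 2 * mu * eta * (u \<bullet> Jac w) + (mu * eta)\<^sup>2 * (Q \<bullet> Q)"
    by (simp add: wQ[symmetric] inner_simps inner_commute power2_eq_square algebra_simps)
  have 3: "(u - eta *\<^sub>R P) \<bullet> Jac (w + (mu * eta) *\<^sub>R Q) = u \<bullet> Jac w + mu * eta * (Q \<bullet> Q)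
      - eta * (lam * (u \<bullet> Jac w) + Jac w \<bullet> Jac w) - mu * eta\<^sup>2 * (P \<bullet> Jac Q)"
    by (simp add: uJQ[symmetric] P_def Jac_add Jac_scaleR inner_simps power2_eq_square algebra_simps)
  show ?thesis
    unfolding LL lyap_def fst_conv snd_conv 1 2 3
    by (simp add: lyap_rate1_def lyap_rate2_def P_def[symmetric] Q_def[symmetric]
        power2_eq_square algebra_simps)
qed

lemma lyap_rate1_le: "lyap_rate1 u w \<le> - decay * (u \<bullet> u + w \<bullet> w)"
proof -
  have QQ: "Jac_adj u \<bullet> Jac_adj u \<le> Jac_bound\<^sup>2 * (u \<bullet> u)"
    using norm_Jac_adj_le[of u] power_mono[of "norm (Jac_adj u)" "Jac_bound * norm u" 2]
    by (simp add: power_mult_distrib flip: power2_norm_eq_inner)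
  have "0 \<le> (lam *\<^sub>R u + Jac w) \<bullet> (lam *\<^sub>R u + Jac w)" by simp
  then have uJ: "- 2 * lam * (u \<bullet> Jac w) \<le> lam\<^sup>2 * (u \<bullet> u) + Jac w \<bullet> Jac w"
    by (simp add: inner_simps inner_commute power2_eq_square algebra_simps)
  have JJ: "k3 / N\<^sup>2 * (w \<bullet> w) \<le> Jac w \<bullet> Jac w" by (rule Jac_coercive)
  have a1: "gam * mu * (Jac_adj u \<bullet> Jac_adj u) \<le> gam * mu * (Jac_bound\<^sup>2 * (u \<bullet> u))"
    using QQ gam_pos mu_pos by simp
  have a2: "gam * (- 2 * lam * (u \<bullet> Jac w)) \<le> gam * (lam\<^sup>2 * (u \<bullet> u) + Jac w \<bullet> Jac w)"
    using uJ gam_pos by (intro mult_left_mono) auto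
  have "lyap_rate1 u w = - 2 * mu * lam * (u \<bullet> u) + 2 * (gam * mu * (Jac_adj u \<bullet> Jac_adj u))
      + gam * (- 2 * lam * (u \<bullet> Jac w)) - 2 * gam * (Jac w \<bullet> Jac w)"
    by (simp add: lyap_rate1_def algebra_simps)
  also have "\<dots> \<le> - 2 * mu * lam * (u \<bullet> u) + 2 * (gam * mu * (Jac_bound\<^sup>2 * (u \<bullet> u)))
      + gam * (lam\<^sup>2 * (u \<bullet> u) + Jac w \<bullet> Jac w) - 2 * gam * (Jac w \<bullet> Jac w)"
    using a1 a2 by linarith
  also have "\<dots> = - 2 * mu * lam * (u \<bullet> u) + gam * (2 * mu * Jac_bound\<^sup>2 + lam\<^sup>2) * (u \<bullet> u)
      - gam * (Jac w \<bullet> Jac w)"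
    by (simp add: algebra_simps)
  also have "\<dots> = - (mu * lam) * (u \<bullet> u) - gam * (Jac w \<bullet> Jac w)"
    unfolding gam_eq by (simp add: algebra_simps)
  also have "\<dots> \<le> - (mu * lam) * (u \<bullet> u) - (gam * k3 / N\<^sup>2) * (w \<bullet> w)"
    using mult_left_mono[OF JJ, of gam] gam_pos by simp
  also have "\<dots> \<le> - decay * (u \<bullet> u + w \<bullet> w)"
    using mult_right_mono[of decay "mu * lam" "u \<bullet> u"] mult_right_mono[of decay "gam * k3 / N\<^sup>2" "w \<bullet> w"]
    by (simp add: decay_def algebra_simps)
  finally show ?thesis .
qed

lemma lyap_rate2_le: "lyap_rate2 u w \<le> second_order_bound * (u \<bullet> u + w \<bullet> w)"
proof -
  define P where "P = lam *\<^sub>R u + Jac w"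
  define Q where "Q = Jac_adj u"
  have nQ: "norm Q \<le> Jac_bound * norm u" unfolding Q_def by (rule norm_Jac_adj_le)
  have QQ: "Q \<bullet> Q \<le> Jac_bound\<^sup>2 * (u \<bullet> u)"
    using power_mono[OF nQ, of 2] by (simp add: power_mult_distrib flip: power2_norm_eq_inner)
  have "norm (Jac Q) \<le> Jac_bound * (Jac_bound * norm u)"
    using norm_Jac_le[of Q] nQ Jac_bound_ge_1 by (meson mult_left_mono order.trans zero_le_one)
  then have "(norm (Jac Q))\<^sup>2 \<le> (Jac_bound * (Jac_bound * norm u))\<^sup>2"
    by (rule power_mono) simp
  then have JQ: "Jac Q \<bullet> Jac Q \<le> Jac_bound ^ 4 * (u \<bullet> u)"
    by (simp add: power_mult_distrib power4_eq_xxxx power2_eq_square mult_ac flip: power2_norm_eq_inner)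
  have "norm P \<le> lam * norm u + Jac_bound * norm w"
    using norm_triangle_ineq[of "lam *\<^sub>R u" "Jac w"] norm_Jac_le[of w] lam_pos by (simp add: P_def)
  then have "P \<bullet> P \<le> (lam * norm u + Jac_bound * norm w)\<^sup>2"
    using power_mono[of "norm P" _ 2] by (simp flip: power2_norm_eq_inner)
  also have "\<dots> \<le> 2 * (lam * norm u)\<^sup>2 + 2 * (Jac_bound * norm w)\<^sup>2"
    using zero_le_power2[of "lam * norm u - Jac_bound * norm w"]
    by (simp add: power2_eq_square algebra_simps)
  also have "\<dots> = 2 * lam\<^sup>2 * (u \<bullet> u) + 2 * Jac_bound\<^sup>2 * (w \<bullet> w)"
    by (simp add: power_mult_distrib power2_norm_eq_inner)
  finally have PP: "P \<bullet> P \<le> 2 * lam\<^sup>2 * (u \<bullet> u) + 2 * Jac_bound\<^sup>2 * (w \<bullet> w)" .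
  have "0 \<le> (P + Jac Q) \<bullet> (P + Jac Q)" by simp
  then have PJQ: "- 2 * (P \<bullet> Jac Q) \<le> P \<bullet> P + Jac Q \<bullet> Jac Q"
    by (simp add: inner_simps inner_commute)
  have "lyap_rate2 u w \<le> (mu + gam * mu) * (P \<bullet> P) + mu\<^sup>2 * (Jac_bound\<^sup>2 * (u \<bullet> u))
      + gam * mu * (Jac_bound ^ 4 * (u \<bullet> u))"
  proof -
    have "gam * mu * (- 2 * (P \<bullet> Jac Q)) \<le> gam * mu * (P \<bullet> P + Jac_bound ^ 4 * (u \<bullet> u))"
      using PJQ JQ gam_pos mu_pos by (intro mult_left_mono) auto
    moreover have "mu\<^sup>2 * (Q \<bullet> Q) \<le> mu\<^sup>2 * (Jac_bound\<^sup>2 * (u \<bullet> u))"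
      using QQ by (intro mult_left_mono) auto
    ultimately show ?thesis
      by (simp add: lyap_rate2_def P_def[symmetric] Q_def[symmetric] algebra_simps)
  qed
  also have "\<dots> \<le> (mu + gam * mu) * (2 * lam\<^sup>2 * (u \<bullet> u) + 2 * Jac_bound\<^sup>2 * (w \<bullet> w))
      + mu\<^sup>2 * (Jac_bound\<^sup>2 * (u \<bullet> u)) + gam * mu * (Jac_bound ^ 4 * (u \<bullet> u))"
    using PP mu_pos gam_pos by (intro add_mono mult_left_mono) auto
  also have "\<dots> \<le> second_order_bound * (u \<bullet> u + w \<bullet> w)"
  proof -
    have "0 \<le> (mu + gam * mu) * 2 * Jac_bound\<^sup>2 * (u \<bullet> u) + (mu + gam * mu) * 2 * lam\<^sup>2 * (w \<bullet> w)
        + (mu\<^sup>2 * Jac_bound\<^sup>2 + gam * mu * Jac_bound ^ 4) * (w \<bullet> w) + (u \<bullet> u + w \<bullet> w)"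
      using mu_pos gam_pos by (intro add_nonneg_nonneg mult_nonneg_nonneg) auto
    then show ?thesis by (simp add: second_order_bound_def algebra_simps)
  qed
  finally show ?thesis .
qed

lemma lyap_lin_step_le:
  assumes eta: "0 < eta" "eta \<le> eta_max"
  shows "lyap (lin_step eta v) \<le> lyap v - (eta * decay / 2) * (norm v)\<^sup>2"
proof -
  obtain u w where v: "v = (u, w)" by fastforce
  define S where "S = u \<bullet> u + w \<bullet> w"
  have S: "S = (norm v)\<^sup>2" by (simp add: S_def v norm_prod_sq)
  have "eta * second_order_bound \<le> decay / 2"
    using eta second_order_bound_pos by (simp add: eta_max_def pos_le_divide_eq field_simps)
  then have "eta\<^sup>2 * (second_order_bound * S) \<le> eta * (decay / 2 * S)"
    using eta S mult_right_mono[of "eta * second_order_bound" "decay / 2" S]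
    by (simp add: power2_eq_square mult_ac)
  moreover have "eta * lyap_rate1 u w \<le> eta * (- decay * S)"
    using lyap_rate1_le[of u w] eta by (intro mult_left_mono) (auto simp: S_def)
  moreover have "eta\<^sup>2 * lyap_rate2 u w \<le> eta\<^sup>2 * (second_order_bound * S)"
    using lyap_rate2_le[of u w] by (intro mult_left_mono) (auto simp: S_def)
  ultimately show ?thesis
    unfolding S[symmetric] unfolding v lyap_lin_step by (simp add: algebra_simps)
qed

abbreviation "F eta \<equiv> gan_step a xr lam eta (mu * eta)"

lemma fst_linearization_error:
  "fst (F eta z - (0, xgs) - lin_step eta (z - (0, xgs)))
     = eta *\<^sub>R (\<Sum>j\<in>UNIV. (1 / N) *\<^sub>R (a (xgs $ j) - a (snd z $ j)
         + blinfun_apply (f' (xgs $ j)) (snd z $ j - xgs $ j)))"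
proof -
  have "(\<Sum>i\<in>UNIV. (1 / N) *\<^sub>R a (xr i)) = (\<Sum>j\<in>UNIV. (1 / N) *\<^sub>R a (xgs $ j))"
    by (rule same_distr_sum_eq[OF same])
  then have "fst (F eta z - (0, xgs) - lin_step eta (z - (0, xgs)))
      = eta *\<^sub>R ((\<Sum>j\<in>UNIV. (1 / N) *\<^sub>R a (xgs $ j)) - (\<Sum>j\<in>UNIV. (1 / N) *\<^sub>R a (snd z $ j))
          + Jac (snd z - xgs))"
    by (simp add: fst_gan_step lin_step_def N_def algebra_simps)
  also have "\<dots> = eta *\<^sub>R (\<Sum>j\<in>UNIV. (1 / N) *\<^sub>R (a (xgs $ j) - a (snd z $ j)
         + blinfun_apply (f' (xgs $ j)) (snd z $ j - xgs $ j)))"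
    by (simp add: Jac_def scaleR_add_right scaleR_diff_right sum.distrib sum_subtractf)
  finally show ?thesis .
qed

lemma snd_linearization_error_nth:
  "snd (F eta z - (0, xgs) - lin_step eta (z - (0, xgs))) $ j
     = (mu * eta / N) *\<^sub>R (adjoint (blinfun_apply (f' (snd z $ j))) (fst z)
         - adjoint (blinfun_apply (f' (xgs $ j))) (fst z))"
  by (simp add: snd_gan_step_nth lin_step_def Jac_adj_def N_def algebra_simps)

definition first_order_close :: "real \<Rightarrow> 'b \<times> ('d, 'n) vec \<Rightarrow> bool" where
  "first_order_close \<epsilon> z \<longleftrightarrow> (\<forall>j.
     norm (a (snd z $ j) - a (xgs $ j) - blinfun_apply (f' (xgs $ j)) (snd z $ j - xgs $ j))
       \<le> \<epsilon> * norm (snd z $ j - xgs $ j)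
     \<and> norm (f' (snd z $ j) - f' (xgs $ j)) < \<epsilon>)"

lemma eventually_first_order_close:
  assumes "\<epsilon> > 0"
  shows "eventually (first_order_close \<epsilon>) (nhds (0, xgs))"
  unfolding first_order_close_def
proof (rule eventually_all_finite)
  fix j
  have "((\<lambda>z. snd z $ j) \<longlongrightarrow> xgs $ j) (nhds (0, xgs))"
    using tendsto_vec_nth[OF tendsto_snd[OF filterlim_ident[of "nhds (0, xgs)"]]] by simp
  then have "\<forall>P. eventually P (nhds (xgs $ j)) \<longrightarrow> eventually (\<lambda>z. P (snd z $ j)) (nhds (0, xgs))"
    unfolding filterlim_iff .
  from this[rule_format, OF eventually_first_order_bounds[OF da has_derivative_continuous[OF df] assms]]
  show "eventually (\<lambda>z. norm (a (snd z $ j) - a (xgs $ j) - blinfun_apply (f' (xgs $ j)) (snd z $ j - xgs $ j))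
       \<le> \<epsilon> * norm (snd z $ j - xgs $ j) \<and> norm (f' (snd z $ j) - f' (xgs $ j)) < \<epsilon>) (nhds (0, xgs))" .
qed

lemma norm_fst_le_dist_equilibrium: "norm (fst z) \<le> norm (z - (0, xgs))"
  using dist_fst_le[of z "(0, xgs)"] by (simp add: dist_norm)

lemma norm_snd_nth_le_dist_equilibrium: "norm (snd z $ j - xgs $ j) \<le> norm (z - (0, xgs))"
  using dist_vec_nth_le[of "snd z" j xgs] dist_snd_le[of z "(0, xgs)"] by (simp add: dist_norm)

lemma norm_fst_linearization_error_le:
  assumes eta: "eta > 0" and e: "\<epsilon> > 0" and close: "first_order_close \<epsilon> z"
  shows "norm (fst (F eta z - (0, xgs) - lin_step eta (z - (0, xgs)))) \<le> eta * \<epsilon> * norm (z - (0, xgs))"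
proof -
  define n where "n = norm (z - (0, xgs))"
  define r where "r j = a (xgs $ j) - a (snd z $ j) + blinfun_apply (f' (xgs $ j)) (snd z $ j - xgs $ j)" for j
  have "norm (r j) \<le> \<epsilon> * n" for j
  proof -
    have "r j = - (a (snd z $ j) - a (xgs $ j) - blinfun_apply (f' (xgs $ j)) (snd z $ j - xgs $ j))"
      by (simp add: r_def algebra_simps)
    then have "norm (r j) \<le> \<epsilon> * norm (snd z $ j - xgs $ j)"
      using close unfolding first_order_close_def by (simp only: norm_minus_cancel)
    also have "\<dots> \<le> \<epsilon> * n"
      using norm_snd_nth_le_dist_equilibrium[of z j] e by (simp add: n_def)
    finally show ?thesis .
  qed
  then have pw: "norm ((1 / N) *\<^sub>R r j) \<le> (1 / N) * (\<epsilon> * n)" for j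
    using N_pos by (simp add: divide_right_mono)
  have "norm (fst (F eta z - (0, xgs) - lin_step eta (z - (0, xgs)))) = eta * norm (\<Sum>j\<in>UNIV. (1 / N) *\<^sub>R r j)"
    unfolding fst_linearization_error r_def using eta by simp
  also have "\<dots> \<le> eta * (\<Sum>j\<in>UNIV. norm ((1 / N) *\<^sub>R r j))"
    using eta by (intro mult_left_mono norm_sum) auto
  also have "\<dots> \<le> eta * (\<Sum>j::'n\<in>UNIV. (1 / N) * (\<epsilon> * n))"
    using eta by (intro mult_left_mono sum_mono pw) auto
  also have "\<dots> = eta * \<epsilon> * n" using N_pos by (simp add: N_def)
  finally show ?thesis by (simp add: n_def)
qed

lemma norm_snd_linearization_error_le:
  assumes eta: "eta > 0" and e: "\<epsilon> > 0" and close: "first_order_close \<epsilon> z"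
  shows "norm (snd (F eta z - (0, xgs) - lin_step eta (z - (0, xgs)))) \<le> mu * eta * \<epsilon> * norm (z - (0, xgs))"
proof -
  define D where "D = snd (F eta z - (0, xgs) - lin_step eta (z - (0, xgs)))"
  define n where "n = norm (z - (0, xgs))"
  have "norm (D $ j) \<le> (mu * eta / N) * (\<epsilon> * n)" for j
  proof -
    have "norm (D $ j) = (mu * eta / N) * norm (adjoint (blinfun_apply (f' (snd z $ j))) (fst z)
        - adjoint (blinfun_apply (f' (xgs $ j))) (fst z))"
      unfolding D_def snd_linearization_error_nth using mu_pos eta N_pos by simp
    also have "\<dots> \<le> (mu * eta / N) * (norm (f' (snd z $ j) - f' (xgs $ j)) * norm (fst z))"
      using mu_pos eta N_pos by (intro mult_left_mono norm_adjoint_diff_le) auto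
    also have "\<dots> \<le> (mu * eta / N) * (\<epsilon> * n)"
      using close[unfolded first_order_close_def, rule_format, of j] norm_fst_le_dist_equilibrium[of z]
        mu_pos eta N_pos e unfolding n_def by (intro mult_left_mono mult_mono) auto
    finally show ?thesis .
  qed
  then have "(\<Sum>j\<in>UNIV. norm (D $ j)) \<le> (\<Sum>j::'n\<in>UNIV. (mu * eta / N) * (\<epsilon> * n))"
    by (rule sum_mono)
  then have "norm D \<le> (\<Sum>j::'n\<in>UNIV. (mu * eta / N) * (\<epsilon> * n))"
    using norm_vec_le_sum_norm_nth[of D] by linarith
  also have "\<dots> = mu * eta * \<epsilon> * n" using N_pos by (simp add: N_def)
  finally show ?thesis by (simp add: D_def n_def)
qed

lemma eventually_linearization_error_le:
  assumes eta: "eta > 0" and e: "\<epsilon> > 0"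
  shows "eventually (\<lambda>z. norm (F eta z - (0, xgs) - lin_step eta (z - (0, xgs))) \<le> \<epsilon> * norm (z - (0, xgs)))
           (nhds (0, xgs))"
proof -
  define \<epsilon>1 where "\<epsilon>1 = \<epsilon> / (eta * (1 + mu))"
  have e1: "\<epsilon>1 > 0" using e eta mu_pos by (simp add: \<epsilon>1_def)
  have bound: "norm (F eta z - (0, xgs) - lin_step eta (z - (0, xgs))) \<le> \<epsilon> * norm (z - (0, xgs))"
    if close: "first_order_close \<epsilon>1 z" for z
  proof -
    let ?D = "F eta z - (0, xgs) - lin_step eta (z - (0, xgs))"
    have "norm ?D \<le> norm (fst ?D) + norm (snd ?D)"
      using norm_Pair_le[of "fst ?D" "snd ?D"] by (simp only: prod.collapse)
    also have "\<dots> \<le> eta * (1 + mu) * \<epsilon>1 * norm (z - (0, xgs))"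
      using norm_fst_linearization_error_le[OF eta e1 close] norm_snd_linearization_error_le[OF eta e1 close]
      by (simp add: algebra_simps)
    also have "eta * (1 + mu) * \<epsilon>1 = \<epsilon>" using eta mu_pos by (simp add: \<epsilon>1_def)
    finally show ?thesis .
  qed
  show ?thesis by (rule eventually_mono[OF eventually_first_order_close[OF e1] bound])
qed

lemma locally_stable_matched:
  assumes eta: "0 < eta" "eta \<le> eta_max" and fp: "F eta (\<theta>s, xgs) = (\<theta>s, xgs)"
  shows "locally_stable (F eta) (\<theta>s, xgs)"
proof -
  have "\<theta>s = 0" by (rule fixed_point_theta_eq_0[OF eta(1) fp])
  moreover have "locally_stable (F eta) (0, xgs)"
  proof (rule locally_stable_if_lyapunov[where W = lyap and L = "lin_step eta"])
    show "\<And>\<epsilon>. \<epsilon> > 0 \<Longrightarrow> eventually (\<lambda>z. norm (F eta z - (0, xgs) - lin_step eta (z - (0, xgs)))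
        \<le> \<epsilon> * norm (z - (0, xgs))) (nhds (0, xgs))"
      by (rule eventually_linearization_error_le[OF eta(1)])
    show "min mu 1 / 2 > 0" using mu_pos by simp
    show "3 / 2 * max mu 1 > 0" by simp
    show "eta * decay / 2 > 0" using eta decay_pos by simp
    show "2 + eta * lam + eta * Jac_bound + mu * eta * Jac_bound \<ge> 0"
      using eta lam_pos mu_pos Jac_bound_ge_1 by simp
    show "\<And>v. norm (lin_step eta v) \<le> (2 + eta * lam + eta * Jac_bound + mu * eta * Jac_bound) * norm v"
      using eta by (intro norm_lin_step_le) simp
    show "\<And>v. min mu 1 / 2 * (norm v)\<^sup>2 \<le> lyap v" by (rule lyap_ge)
    show "\<And>v. lyap v \<le> 3 / 2 * max mu 1 * (norm v)\<^sup>2" by (rule lyap_le)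
    show "\<And>v. lyap (lin_step eta v) \<le> lyap v - eta * decay / 2 * (norm v)\<^sup>2"
      by (rule lyap_lin_step_le[OF eta(1,2)])
    show "lyap_incr_const > 0" by (rule lyap_incr_const_pos)
    show "\<And>x y. lyap (x + y) - lyap x \<le> lyap_incr_const * (norm x * norm y + (norm y)\<^sup>2)"
      by (rule lyap_increment_le)
  qed
  ultimately show ?thesis by simp
qed

end

lemma gan_dynamics_if_kernel_conditions:
  fixes a :: "'d::euclidean_space \<Rightarrow> 'b::euclidean_space" and xr :: "'n::finite \<Rightarrow> 'd"
  assumes "C2 a" and "isolated_nbhds (kern a) xr"
    and hess: "\<forall>i. neg_hessian_in (kern a) (xr i) k1 k2"
    and mixed: "\<forall>i. mixed_hessian_in (kern a) (xr i) k3 k4"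
    and "lam > 0" "mu > 0" "k1 > 0" "k3 > 0"
  shows "\<exists>f' f'' V. gan_dynamics a xr f' f'' V lam mu k1 k3"
proof -
  obtain f' f'' where da: "\<And>x. (a has_derivative blinfun_apply (f' x)) (at x)"
    and df: "\<And>x. (f' has_derivative blinfun_apply (f'' x)) (at x)" and "continuous_on UNIV f''"
    using \<open>C2 a\<close> unfolding C2_def by blast
  moreover obtain V :: "'n \<Rightarrow> 'd set" where "\<And>i. open (V i)" "\<And>i. xr i \<in> V i"
    and V_kern: "\<And>i l. i \<noteq> l \<Longrightarrow> \<forall>x\<in>V i. \<forall>x'\<in>V l. kern a x x' = 0"
    using \<open>isolated_nbhds (kern a) xr\<close> unfolding isolated_nbhds_def by metis
  moreover have "\<And>i l x y. i \<noteq> l \<Longrightarrow> x \<in> V i \<Longrightarrow> y \<in> V l \<Longrightarrow> a x \<bullet> a y = 0"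
    using V_kern unfolding kern_def by blast
  moreover have "blinfun_diag (f'' (xr i)) e \<bullet> a (xr i) \<le> - k1 * (e \<bullet> e)" for i e
    using hess by (intro neg_hessian_in_imp_diag_le[OF da df]) blast
  moreover have "k3 * (v \<bullet> v) \<le> blinfun_apply (f' (xr i)) v \<bullet> blinfun_apply (f' (xr i)) v" for i v
    using mixed by (intro mixed_hessian_in_imp_coercive[OF da]) blast
  ultimately have "gan_dynamics a xr f' f'' V lam mu k1 k3"
    using assms by unfold_locales
  then show ?thesis by blast
qed

theorem corollary1:
  fixes a :: "'d::euclidean_space \<Rightarrow> 'b::euclidean_space"
    and xr :: "'n::finite \<Rightarrow> 'd"
    and lam mu k1 k2 k3 k4 :: real
    and \<theta>s :: 'b and xgs :: "('d, 'n) vec"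
  assumes a_C2: "C2 a"
    and K_smooth: "smooth_fun (\<lambda>z. kern a (fst z) (snd z))"
    and lam_pos: "lam > 0" and mu_pos: "mu > 0"
    and k_pos: "k1 > 0" "k2 > 0" "k3 > 0" "k4 > 0"
    and iso: "isolated_nbhds (kern a) xr"
    and grad_zero: "\<forall>i. GDERIV (\<lambda>x. kern a x (xr i)) (xr i) :> 0"
    and hess: "\<forall>i. neg_hessian_in (kern a) (xr i) k1 k2"
    and mixed: "\<forall>i. mixed_hessian_in (kern a) (xr i) k3 k4"
    and supp: "\<forall>j. xgs $ j \<in> range xr"
  shows "\<exists>\<eta>0>0. \<forall>eta_d. 0 < eta_d \<and> eta_d < \<eta>0 \<and>
           gan_step a xr lam eta_d (mu * eta_d) (\<theta>s, xgs) = (\<theta>s, xgs) \<longrightarrow>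
           (locally_stable (gan_step a xr lam eta_d (mu * eta_d)) (\<theta>s, xgs)
              \<longleftrightarrow> same_distr xr xgs)"
proof -
  obtain f' f'' V where "gan_dynamics a xr f' f'' V lam mu k1 k3"
    using gan_dynamics_if_kernel_conditions[OF a_C2 iso hess mixed lam_pos mu_pos k_pos(1,3)] by blast
  then interpret gan_dynamics a xr f' f'' V lam mu k1 k3 .
  show ?thesis
  proof (cases "same_distr xr xgs")
    case True
    interpret gan_matched a xr f' f'' V lam mu k1 k3 xgs
      using supp True by unfold_locales
    have "locally_stable (F eta) (\<theta>s, xgs)"
      if "0 < eta" "eta < eta_max" "F eta (\<theta>s, xgs) = (\<theta>s, xgs)" for eta
      using locally_stable_matched that by simp
    with eta_max_pos True show ?thesis by blast
  next
    case False
    then obtain i0 j1 j2 where "j1 \<noteq> j2" "xgs $ j1 = xr i0" "xgs $ j2 = xr i0"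
      using collision_if_not_same_distr[OF supp] by blast
    then have "\<not> locally_stable (gan_step a xr lam eta (mu * eta)) (\<theta>s, xgs)"
      if "0 < eta" "gan_step a xr lam eta (mu * eta) (\<theta>s, xgs) = (\<theta>s, xgs)" for eta
      using not_locally_stable_if_collision[OF that supp] by blast
    with False show ?thesis by (intro exI[of _ 1]) auto
  qed
qed

end
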